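(* Suppose $p\neq2$, let $n\ge1$, $\alpha,\beta_1,\dots,\beta_n\in\widehat{\mathbb{F}_q^\times}$ with $\beta_i\neq\varepsilon$ for all $i$. For $\lambda_1,\dots,\lambda_n\in\mathbb{F}_q$ with $\sum_{i=1}^n\lambda_i\neq-1$, $$F_C^{(n)}\!\left({\alpha;\alpha\phi\atop\beta_1\phi,\dots,\beta_n\phi};\lambda_1^2,\dots,\lambda_n^2\right)=\overline{\alpha}^2\Big(1+\sum_{i=1}^n\lambda_i\Big)F_A^{(n)}\!\left({\alpha^2;\beta_1,\dots,\beta_n\atop\beta_1^2,\dots,\beta_n^2};\frac{2\lambda_1}{1+\sum_i\lambda_i},\dots,\frac{2\lambda_n}{1+\sum_i\lambda_i}\right).$$
   Context: $\mathbb{F}_q$ is a finite field with $q$ elements and characteristic $p$. $\widehat{\mathbb{F}_q^\times}$ is the group of multiplicative characters $\mathbb{F}_q^\times\to\overline{\mathbb{Q}}^\times$, $\varepsilon$ the trivial character, $\phi$ the quadratic character; every character $\eta$ (including $\varepsilon$) is extended by $\eta(0)=0$; $\overline{\eta}=\eta^{-1}$, and $\overline{\alpha}^2=\overline{\alpha}\,\overline{\alpha}$; $\delta(\eta)=1$ if $\eta=\varepsilon$, else $0$. $\psi$ is a fixed non-trivial additive character. $g(\eta)=-\sum_{x\in\mathbb{F}_q^\times}\psi(x)\eta(x)$, $g^\circ(\eta)=q^{\delta(\eta)}g(\eta)$, $(\alpha)_\nu=g(\alpha\nu)/g(\alpha)$, $(\alpha)^\circ_\nu=g^\circ(\alpha\nu)/g^\circ(\alpha)$.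 For $\lambda_i\in\mathbb{F}_q$, with sums over $\nu_1,\dots,\nu_n\in\widehat{\mathbb{F}_q^\times}$, $F_A^{(n)}\!\left({\alpha;\beta_1,\dots,\beta_n\atop\gamma_1,\dots,\gamma_n};\lambda\right)=\frac{1}{(1-q)^n}\sum\frac{(\alpha)_{\nu_1\cdots\nu_n}\prod_i(\beta_i)_{\nu_i}}{\prod_i(\gamma_i)^\circ_{\nu_i}(\varepsilon)^\circ_{\nu_i}}\prod_i\nu_i(\lambda_i)$, $F_C^{(n)}\!\left({\alpha;\beta\atop\gamma_1,\dots,\gamma_n};\lambda\right)=\frac{1}{(1-q)^n}\sum\frac{(\alpha)_{\nu_1\cdots\nu_n}(\beta)_{\nu_1\cdots\nu_n}}{\prod_i(\gamma_i)^\circ_{\nu_i}(\varepsilon)^\circ_{\nu_i}}\prod_i\nu_i(\lambda_i)$. *)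

theory Defs
  imports "HOL-Analysis.Analysis"
begin

text \<open>Multiplicative characters of the finite field 'a, with values in the complex
numbers (containing the algebraic numbers), extended by 0 at 0.\<close>
definition mchars :: "('a::{finite,field} \<Rightarrow> complex) set" where
  "mchars = {c. c 0 = 0 \<and> (\<forall>x. x \<noteq> 0 \<longrightarrow> c x \<noteq> 0) \<and> (\<forall>x y. c (x * y) = c x * c y)}"

definition chmul :: "('a::{finite,field} \<Rightarrow> complex) \<Rightarrow> ('a \<Rightarrow> complex) \<Rightarrow> 'a \<Rightarrow> complex" where
  "chmul \<alpha> \<beta> = (\<lambda>x. \<alpha> x * \<beta> x)"

definition chinv :: "('a::{finite,field} \<Rightarrow> complex) \<Rightarrow> 'a \<Rightarrow> complex" where
  "chinv \<alpha> = (\<lambda>x. inverse (\<alpha> x))"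

definition eps :: "'a::{finite,field} \<Rightarrow> complex" where
  "eps = (\<lambda>x. if x = 0 then 0 else 1)"

definition qchar :: "'a::{finite,field} \<Rightarrow> complex" where
  "qchar = (\<lambda>x. if x = 0 then 0 else if (\<exists>y. y ^ 2 = x) then 1 else -1)"

definition nontriv_add_char :: "('a::{finite,field} \<Rightarrow> complex) \<Rightarrow> bool" where
  "nontriv_add_char \<psi> \<longleftrightarrow> (\<forall>x. \<psi> x \<noteq> 0) \<and> (\<forall>x y. \<psi> (x + y) = \<psi> x * \<psi> y) \<and> (\<exists>x. \<psi> x \<noteq> 1)"

definition gauss :: "('a::{finite,field} \<Rightarrow> complex) \<Rightarrow> ('a \<Rightarrow> complex) \<Rightarrow> complex" where
  "gauss \<psi> \<eta> = - (\<Sum>x\<in>UNIV - {0}. \<psi> x * \<eta> x)"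

definition gauss0 :: "('a::{finite,field} \<Rightarrow> complex) \<Rightarrow> ('a \<Rightarrow> complex) \<Rightarrow> complex" where
  "gauss0 \<psi> \<eta> = of_nat CARD('a) ^ (if \<eta> = eps then 1 else 0) * gauss \<psi> \<eta>"

definition poch :: "('a::{finite,field} \<Rightarrow> complex) \<Rightarrow> ('a \<Rightarrow> complex) \<Rightarrow> ('a \<Rightarrow> complex) \<Rightarrow> complex" where
  "poch \<psi> \<alpha> \<nu> = gauss \<psi> (chmul \<alpha> \<nu>) / gauss \<psi> \<alpha>"

definition poch0 :: "('a::{finite,field} \<Rightarrow> complex) \<Rightarrow> ('a \<Rightarrow> complex) \<Rightarrow> ('a \<Rightarrow> complex) \<Rightarrow> complex" where
  "poch0 \<psi> \<alpha> \<nu> = gauss0 \<psi> (chmul \<alpha> \<nu>) / gauss0 \<psi> \<alpha>"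

definition chprod :: "nat \<Rightarrow> (nat \<Rightarrow> 'a::{finite,field} \<Rightarrow> complex) \<Rightarrow> 'a \<Rightarrow> complex" where
  "chprod n \<nu> = (\<lambda>x. \<Prod>i\<in>{1..n}. \<nu> i x)"

definition FA :: "('a::{finite,field} \<Rightarrow> complex) \<Rightarrow> nat \<Rightarrow> ('a \<Rightarrow> complex) \<Rightarrow>
    (nat \<Rightarrow> 'a \<Rightarrow> complex) \<Rightarrow> (nat \<Rightarrow> 'a \<Rightarrow> complex) \<Rightarrow> (nat \<Rightarrow> 'a) \<Rightarrow> complex" where
  "FA \<psi> n \<alpha> \<beta> \<gamma> z = 1 / (1 - of_nat CARD('a)) ^ n *
     (\<Sum>\<nu>\<in>{1..n} \<rightarrow>\<^sub>E mchars.
        poch \<psi> \<alpha> (chprod n \<nu>) * (\<Prod>i\<in>{1..n}. poch \<psi> (\<beta> i) (\<nu> i))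
        / (\<Prod>i\<in>{1..n}. poch0 \<psi> (\<gamma> i) (\<nu> i) * poch0 \<psi> eps (\<nu> i))
        * (\<Prod>i\<in>{1..n}. \<nu> i (z i)))"

definition FC :: "('a::{finite,field} \<Rightarrow> complex) \<Rightarrow> nat \<Rightarrow> ('a \<Rightarrow> complex) \<Rightarrow>
    ('a \<Rightarrow> complex) \<Rightarrow> (nat \<Rightarrow> 'a \<Rightarrow> complex) \<Rightarrow> (nat \<Rightarrow> 'a) \<Rightarrow> complex" where
  "FC \<psi> n \<alpha> \<beta> \<gamma> z = 1 / (1 - of_nat CARD('a)) ^ n *
     (\<Sum>\<nu>\<in>{1..n} \<rightarrow>\<^sub>E mchars.
        poch \<psi> \<alpha> (chprod n \<nu>) * poch \<psi> \<beta> (chprod n \<nu>)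
        / (\<Prod>i\<in>{1..n}. poch0 \<psi> (\<gamma> i) (\<nu> i) * poch0 \<psi> eps (\<nu> i))
        * (\<Prod>i\<in>{1..n}. \<nu> i (z i)))"

end

theory Submission
  imports Defs "HOL-Algebra.Multiplicative_Group"
begin

text \<open>By the Hasse-Davenport duplication formula the coefficient of FC is
  (alpha)_N (alpha phi)_N = N(4)^-1 g(alpha^2 N^2) / g(alpha^2), where N = nu_1 ... nu_n.
  Writing g(alpha^2 N^2) as a Gauss sum over s makes the multiple sum over the nu_i factor, so that
  FC becomes a sum over s of psi(s) alpha(s)^2 times a product of one-variable series
  0F1(beta_i phi; (s lam_i)^2 / 4); in the same way FA becomes a sum over s of psi(s) alpha(s)^2 times a
  product of series 1F1(beta_i; beta_i^2; s z_i). A finite field version of Kummer's second formula,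
  0F1(b phi; x^2/4) = psi(x) 1F1(b; b^2; 2x), obtained by evaluating both sides as the same twisted
  Kloosterman sum, turns one product into the other. The leftover factor
  psi(s) prod psi(s lam_i) = psi(s (1 + sum lam_i)) is removed by rescaling s, which produces the
  factor alpha(1 + sum lam_i)^-2.\<close>

section \<open>The cyclic group of units of a finite field\<close>

definition field_ring :: "'a::field ring" where
  "field_ring = \<lparr>carrier = UNIV, monoid.mult = (*), one = 1, ring.zero = 0, add = (+)\<rparr>"

lemma field_field_ring: "field (field_ring :: 'a::field ring)"
proof -
  have "\<exists>y. x + y = 0" for x :: 'a
    using add.right_inverse by blast
  moreover have "x \<noteq> 0 \<Longrightarrow> \<exists>y. x * y = 1" for x :: 'a
    by (rule exI[of _ "inverse x"]) auto
  ultimately show ?thesis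
    unfolding field_ring_def using add.right_inverse
    by unfold_locales (auto simp: algebra_simps Units_def)
qed

lemma field_ring_pow: "x [^]\<^bsub>field_ring\<^esub> (i::nat) = (x::'a::field) ^ i"
proof -
  interpret field "field_ring :: 'a ring" by (rule field_field_ring)
  show ?thesis by (induction i) (simp_all add: field_ring_def mult.commute)
qed

lemma finite_field_exists_generator:
  "\<exists>g::'a::{finite,field}. g \<noteq> 0 \<and> (\<forall>x. x \<noteq> 0 \<longrightarrow> (\<exists>i::nat. x = g ^ i))"
proof -
  interpret field "field_ring :: 'a ring" by (rule field_field_ring)
  have "\<exists>g\<in>carrier (mult_of (field_ring :: 'a ring)).
      carrier (mult_of field_ring) = {g [^]\<^bsub>field_ring\<^esub> i |i::nat. i \<in> UNIV}"
    by (rule finite_field_mult_group_has_gen) (simp add: field_ring_def)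
  then obtain g where g: "g \<in> carrier (mult_of (field_ring :: 'a ring))"
    and gen: "carrier (mult_of (field_ring :: 'a ring)) = {g [^]\<^bsub>field_ring\<^esub> i |i::nat. i \<in> UNIV}"
    by blast
  have "carrier (mult_of (field_ring :: 'a ring)) = UNIV - {0}"
    by (simp add: field_ring_def)
  with g gen show ?thesis by (auto simp: field_ring_pow)
qed

definition prim_root :: "'a::{finite,field}" where
  "prim_root = (SOME g. g \<noteq> 0 \<and> (\<forall>x. x \<noteq> 0 \<longrightarrow> (\<exists>i::nat. x = g ^ i)))"

lemma prim_root_nonzero: "prim_root \<noteq> 0"
  and exists_power_prim_root: "x \<noteq> 0 \<Longrightarrow> \<exists>i. x = prim_root ^ i"
  using someI_ex[OF finite_field_exists_generator] unfolding prim_root_def by blast+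

lemma card_nonzero_elements: "card (UNIV - {0::'a::{finite,field}}) = CARD('a) - 1"
  by (simp add: card_Diff_singleton)

lemma CARD_minus_one_pos: "CARD('a::{finite,field}) - 1 > 0"
proof -
  have "card {0::'a, 1} \<le> CARD('a)" by (intro card_mono) auto
  thus ?thesis by simp
qed

lemma power_CARD_minus_one:
  fixes x :: "'a::{finite,field}" assumes "x \<noteq> 0" shows "x ^ (CARD('a) - 1) = 1"
proof -
  let ?S = "UNIV - {0::'a}"
  have "(\<Prod>y\<in>?S. x * y) = (\<Prod>y\<in>?S. y)"
    by (rule prod.reindex_bij_witness[of _ "\<lambda>y. y / x" "\<lambda>y. x * y"]) (use assms in auto)
  then have "x ^ card ?S * \<Prod>?S = 1 * \<Prod>?S" by (simp add: prod.distrib)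
  then show ?thesis by (simp add: card_nonzero_elements)
qed

lemma power_mod_eq_if_power_eq_1:
  fixes x :: "'a::monoid_mult" assumes "x ^ k = 1" shows "x ^ n = x ^ (n mod k)"
proof -
  have "x ^ n = x ^ (k * (n div k) + n mod k)" by simp
  also have "\<dots> = (x ^ k) ^ (n div k) * x ^ (n mod k)" by (simp only: power_add power_mult)
  finally show ?thesis using assms by simp
qed

lemma prim_root_power_mod: "(prim_root::'a::{finite,field}) ^ i = prim_root ^ (i mod (CARD('a) - 1))"
  by (rule power_mod_eq_if_power_eq_1[OF power_CARD_minus_one[OF prim_root_nonzero]])

lemma image_prim_root_powers:
  "(\<lambda>i. prim_root ^ i) ` {..< CARD('a::{finite,field}) - 1} = UNIV - {0::'a}"
proof
  show "UNIV - {0::'a} \<subseteq> (\<lambda>i. prim_root ^ i) ` {..< CARD('a) - 1}"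
  proof
    fix x :: 'a assume "x \<in> UNIV - {0}"
    then obtain i where "x = prim_root ^ i"
      using exists_power_prim_root by blast
    then have "x = prim_root ^ (i mod (CARD('a) - 1))"
      by (simp only: prim_root_power_mod[of i])
    moreover have "i mod (CARD('a) - 1) < CARD('a) - 1" using CARD_minus_one_pos[where 'a='a] by simp
    ultimately show "x \<in> (\<lambda>i. prim_root ^ i) ` {..< CARD('a) - 1}" by auto
  qed
qed (use prim_root_nonzero in auto)

lemma inj_on_prim_root_powers: "inj_on (\<lambda>i. (prim_root::'a::{finite,field}) ^ i) {..< CARD('a) - 1}"
  by (rule eq_card_imp_inj_on) (simp, metis image_prim_root_powers card_nonzero_elements card_lessThan)

lemma prim_root_power_eq_iff:
  "(prim_root::'a::{finite,field}) ^ i = prim_root ^ j \<longleftrightarrow> i mod (CARD('a) - 1) = j mod (CARD('a) - 1)"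
proof -
  have "i mod (CARD('a) - 1) < CARD('a) - 1" "j mod (CARD('a) - 1) < CARD('a) - 1"
    using CARD_minus_one_pos[where 'a='a] by simp_all
  then show ?thesis
    unfolding prim_root_power_mod[of i] prim_root_power_mod[of j]
    using inj_onD[OF inj_on_prim_root_powers[where 'a='a]] by auto
qed

definition dlog :: "'a::{finite,field} \<Rightarrow> nat" where
  "dlog x = (THE i. i < CARD('a) - 1 \<and> prim_root ^ i = x)"

lemma dlog:
  fixes x :: "'a::{finite,field}" assumes "x \<noteq> 0"
  shows dlog_less: "dlog x < CARD('a) - 1" and prim_root_power_dlog: "prim_root ^ dlog x = x"
proof -
  have "x \<in> (\<lambda>i. prim_root ^ i) ` {..< CARD('a) - 1}"
    using assms image_prim_root_powers by blast
  then obtain i where i: "i < CARD('a) - 1" "prim_root ^ i = x" by auto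
  have "dlog x = i" unfolding dlog_def
  proof (rule the_equality)
    show "j = i" if "j < CARD('a) - 1 \<and> prim_root ^ j = x" for j
      using inj_onD[OF inj_on_prim_root_powers[where 'a='a], of j i] that i by simp
  qed (use i in simp)
  with i show "dlog x < CARD('a) - 1" "prim_root ^ dlog x = x" by simp_all
qed

lemma dlog_prim_root_power: "dlog ((prim_root::'a::{finite,field}) ^ i) = i mod (CARD('a) - 1)"
proof -
  have nz: "(prim_root::'a) ^ i \<noteq> 0" using prim_root_nonzero[where 'a='a] by simp
  have "(prim_root::'a) ^ dlog ((prim_root::'a) ^ i) = prim_root ^ i"
    by (rule prim_root_power_dlog[OF nz])
  then have "dlog ((prim_root::'a) ^ i) mod (CARD('a) - 1) = i mod (CARD('a) - 1)"
    by (simp only: prim_root_power_eq_iff)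
  with dlog_less[OF nz] show ?thesis by simp
qed


section \<open>Multiplicative characters\<close>

lemma mchars_zero [simp]: "ch \<in> mchars \<Longrightarrow> ch 0 = 0"
  and mchars_nonzero: "ch \<in> mchars \<Longrightarrow> x \<noteq> 0 \<Longrightarrow> ch x \<noteq> 0"
  and mchars_mult: "ch \<in> mchars \<Longrightarrow> ch (x * y) = ch x * ch y"
  unfolding mchars_def by blast+

lemma mcharsI:
  "c 0 = 0 \<Longrightarrow> (\<And>x. x \<noteq> 0 \<Longrightarrow> c x \<noteq> 0) \<Longrightarrow> (\<And>x y. c (x * y) = c x * c y) \<Longrightarrow> c \<in> mchars"
  unfolding mchars_def by blast

lemma mchars_one [simp]: assumes "ch \<in> mchars" shows "ch 1 = 1"
  using mchars_mult[OF assms, of 1 1] mchars_nonzero[OF assms, of 1] by simp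

lemma mchars_inverse: assumes "ch \<in> mchars" shows "ch (inverse x) = inverse (ch x)"
proof (cases "x = 0")
  case False
  then have "ch (inverse x) * ch x = 1" using mchars_mult[OF assms, of "inverse x" x] assms by simp
  thus ?thesis by (metis inverse_unique mult.commute)
qed (use assms in simp)

lemma mchars_power: "ch \<in> mchars \<Longrightarrow> ch (x ^ i) = ch x ^ i"
  by (induction i) (simp_all add: mchars_mult)

lemma mchars_minus_one_squared: assumes "ch \<in> mchars" shows "ch (-1) * ch (-1) = 1"
  using mchars_mult[OF assms, of "-1" "-1"] assms by simp

lemma eps_mchars [simp]: "eps \<in> mchars"
  by (rule mcharsI) (auto simp: eps_def)

lemma chmul_mchars [simp]: "a \<in> mchars \<Longrightarrow> b \<in> mchars \<Longrightarrow> chmul a b \<in> mchars"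
  by (rule mcharsI) (auto simp: chmul_def mchars_nonzero mchars_mult mult_ac)

lemma chinv_mchars [simp]: "a \<in> mchars \<Longrightarrow> chinv a \<in> mchars"
  by (rule mcharsI) (auto simp: chinv_def mchars_nonzero mchars_mult)

lemma chmul_apply [simp]: "chmul a b x = a x * b x"
  by (simp add: chmul_def)

lemma chinv_apply [simp]: "chinv a x = inverse (a x)"
  by (simp add: chinv_def)

lemma eps_nonzero [simp]: "x \<noteq> 0 \<Longrightarrow> eps x = 1"
  and eps_zero [simp]: "eps 0 = 0"
  by (simp_all add: eps_def)

lemma chmul_eps [simp]: "a \<in> mchars \<Longrightarrow> chmul a eps = a"
  and eps_chmul [simp]: "a \<in> mchars \<Longrightarrow> chmul eps a = a"
  by (auto simp: fun_eq_iff eps_def)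

lemma chinv_eps [simp]: "chinv eps = eps"
  by (simp add: fun_eq_iff chinv_def eps_def)

definition char_of_root :: "complex \<Rightarrow> 'a::{finite,field} \<Rightarrow> complex" where
  "char_of_root w x = (if x = 0 then 0 else w ^ dlog x)"

lemma char_of_root_mchars:
  fixes w :: complex assumes w: "w ^ (CARD('a::{finite,field}) - 1) = 1"
  shows "(char_of_root w :: 'a \<Rightarrow> complex) \<in> mchars"
proof (rule mcharsI)
  have "w \<noteq> 0" using w CARD_minus_one_pos[where 'a='a] by (auto simp: power_0_left)
  then show "char_of_root w x \<noteq> 0" if "x \<noteq> 0" for x :: 'a
    using that by (simp add: char_of_root_def)
  show "char_of_root w (x * y) = char_of_root w x * char_of_root w y" for x y :: 'a
  proof (cases "x = 0 \<or> y = 0")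
    case False
    then have "x * y = prim_root ^ (dlog x + dlog y)"
      by (simp add: power_add prim_root_power_dlog)
    then have "dlog (x * y) = (dlog x + dlog y) mod (CARD('a) - 1)"
      by (simp add: dlog_prim_root_power)
    then have "w ^ dlog (x * y) = w ^ (dlog x + dlog y)"
      using power_mod_eq_if_power_eq_1[OF w, of "dlog x + dlog y"] by (simp only:)
    with False show ?thesis by (simp add: char_of_root_def power_add)
  qed (auto simp: char_of_root_def)
qed (simp add: char_of_root_def)

lemma char_of_root_prim_root:
  fixes w :: complex assumes w: "w ^ (CARD('a::{finite,field}) - 1) = 1"
  shows "char_of_root w (prim_root :: 'a) = w"
proof -
  have "dlog (prim_root::'a) = 1 mod (CARD('a) - 1)"
    using dlog_prim_root_power[where 'a='a, of 1] by simp
  then have "w ^ dlog (prim_root::'a) = w ^ 1"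
    using power_mod_eq_if_power_eq_1[OF w, of 1] by (simp only:)
  then show ?thesis using prim_root_nonzero[where 'a='a] by (simp add: char_of_root_def)
qed

lemma mchars_eq_char_of_root: assumes "ch \<in> mchars" shows "ch = char_of_root (ch prim_root)"
proof
  fix x :: 'a show "ch x = char_of_root (ch prim_root) x"
    using assms prim_root_power_dlog[of x] mchars_power[OF assms, of prim_root "dlog x"]
    by (cases "x = 0") (simp_all add: char_of_root_def)
qed

lemma bij_betw_mchars_roots_unity:
  "bij_betw (\<lambda>ch. ch prim_root) (mchars :: ('a::{finite,field} \<Rightarrow> complex) set) {w. w ^ (CARD('a) - 1) = 1}"
proof (rule bij_betwI')
  fix x y :: "'a \<Rightarrow> complex" assume xy: "x \<in> mchars" "y \<in> mchars"
  show "(x prim_root = y prim_root) = (x = y)"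
  proof
    assume "x prim_root = y prim_root"
    then show "x = y" using mchars_eq_char_of_root[OF xy(1)] mchars_eq_char_of_root[OF xy(2)] by simp
  qed simp
next
  fix x :: "'a \<Rightarrow> complex" assume x: "x \<in> mchars"
  have "x prim_root ^ (CARD('a) - 1) = x (prim_root ^ (CARD('a) - 1))" by (simp add: mchars_power[OF x])
  also have "(prim_root::'a) ^ (CARD('a) - 1) = 1" by (rule power_CARD_minus_one[OF prim_root_nonzero])
  finally show "x prim_root \<in> {w. w ^ (CARD('a) - 1) = 1}" using x by simp
next
  fix w assume "w \<in> {w::complex. w ^ (CARD('a) - 1) = 1}"
  then have w: "w ^ (CARD('a) - 1) = 1" by simp
  show "\<exists>x\<in>mchars. w = x (prim_root::'a)"
    by (rule bexI[of _ "char_of_root w"]) (simp_all add: char_of_root_mchars[OF w] char_of_root_prim_root[OF w])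
qed

lemma finite_mchars [simp]: "finite (mchars :: ('a::{finite,field} \<Rightarrow> complex) set)"
proof -
  have "finite {w::complex. w ^ (CARD('a) - 1) = 1}"
    by (rule finite_roots_unity) (use CARD_minus_one_pos[where 'a='a] in simp)
  then show ?thesis using bij_betw_finite[OF bij_betw_mchars_roots_unity[where 'a='a]] by simp
qed

lemma card_mchars: "card (mchars :: ('a::{finite,field} \<Rightarrow> complex) set) = CARD('a) - 1"
  using bij_betw_same_card[OF bij_betw_mchars_roots_unity[where 'a='a]]
    card_roots_unity_eq[OF CARD_minus_one_pos[where 'a='a]] by simp

lemma eq_zero_if_eq_mult_self: "(s::'a::idom) = c * s \<Longrightarrow> c \<noteq> 1 \<Longrightarrow> s = 0"
  by (metis mult_cancel_right2)

lemma sum_UNIV_reindex: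
  assumes "\<And>x. g (f x) = x" "\<And>y. f (g y) = y"
  shows "(\<Sum>x\<in>UNIV. h (f x)) = (\<Sum>x\<in>UNIV. h x)"
  by (rule sum.reindex_bij_witness[of _ g f]) (use assms in auto)

lemma sum_UNIV_scale:
  fixes a :: "'a::{finite,field}" assumes "a \<noteq> 0"
  shows "(\<Sum>x\<in>UNIV. h (a * x)) = (\<Sum>x\<in>UNIV. h x)"
  by (rule sum_UNIV_reindex[of "\<lambda>x. x / a"]) (use assms in auto)

lemma sum_UNIV_mchar:
  fixes ch :: "'a::{finite,field} \<Rightarrow> complex" assumes "ch \<in> mchars"
  shows "(\<Sum>x\<in>UNIV. ch x) = (if ch = eps then of_nat (CARD('a) - 1) else 0)"
proof (cases "ch = eps")
  case True
  have "(\<Sum>x\<in>UNIV. eps (x::'a)) = eps (0::'a) + (\<Sum>x\<in>UNIV - {0::'a}. eps x)"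
    by (rule sum.remove) auto
  also have "(\<Sum>x\<in>UNIV - {0::'a}. eps x) = (\<Sum>x\<in>UNIV - {0::'a}. 1)"
    by (rule sum.cong) auto
  finally show ?thesis using True by (simp add: card_nonzero_elements)
next
  case False
  then obtain a where a: "ch a \<noteq> eps a" by auto
  with assms have "a \<noteq> 0" "ch a \<noteq> 1" by (cases "a = 0"; simp add: eps_def)+
  then have "(\<Sum>x\<in>UNIV. ch x) = ch a * (\<Sum>x\<in>UNIV. ch x)"
    using sum_UNIV_scale[of a ch] by (simp add: mchars_mult[OF assms] sum_distrib_left)
  then have "(\<Sum>x\<in>UNIV. ch x) = 0" using \<open>ch a \<noteq> 1\<close> by (rule eq_zero_if_eq_mult_self)
  with False show ?thesis by simp
qed

lemma cis_power: "cis (2 * pi / real M) ^ k = cis (2 * pi * real k / real M)"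
  unfolding Complex.DeMoivre by (simp add: field_simps)

lemma cis_power_ne_1: assumes "0 < k" "k < M" shows "cis (2 * pi / real M) ^ k \<noteq> 1"
proof
  assume "cis (2 * pi / real M) ^ k = 1"
  then have "cis (2 * pi * real k / real M) = cis (2 * pi * real 0 / real M)"
    unfolding cis_power by simp
  moreover have "k \<in> {..<M}" "0 \<in> {..<M}" "M > 0" using assms by auto
  ultimately have "k = 0"
    using Complex.bij_betw_roots_unity[of M] unfolding bij_betw_def inj_on_def by blast
  with assms show False by simp
qed

lemma cis_power_eq_1: assumes "M > 0" shows "cis (2 * pi / real M) ^ M = 1"
proof -
  have "cis (2 * pi / real M) ^ M = cis (2 * pi * real M / real M)" by (rule cis_power)
  also have "\<dots> = cis (2 * pi)" using assms by simp
  finally show ?thesis by (simp add: complex_eq_iff)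
qed

lemma sum_mchars_apply:
  fixes y :: "'a::{finite,field}"
  shows "(\<Sum>ch\<in>mchars. ch y) = (if y = 1 then of_nat (CARD('a) - 1) else 0)"
proof (cases "y = 0 \<or> y = 1")
  case True then show ?thesis by (auto simp: card_mchars)
next
  case False
  let ?M = "CARD('a) - 1"
  define ch0 :: "'a \<Rightarrow> complex" where "ch0 = char_of_root (cis (2 * pi / real ?M))"
  have ch0: "ch0 \<in> mchars"
    unfolding ch0_def by (rule char_of_root_mchars) (rule cis_power_eq_1[OF CARD_minus_one_pos])
  have "dlog y \<noteq> 0" using False prim_root_power_dlog[of y] by (metis power_0)
  then have "ch0 y \<noteq> 1"
    using False cis_power_ne_1[of "dlog y" ?M] dlog_less[of y] by (simp add: ch0_def char_of_root_def)
  have "(\<Sum>ch\<in>mchars. ch y) = (\<Sum>ch\<in>mchars. chmul ch0 ch y)"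
  proof (rule sum.reindex_bij_witness[of _ "chmul ch0" "chmul (chinv ch0)"])
    fix a :: "'a \<Rightarrow> complex" assume a: "a \<in> mchars"
    show "chmul (chinv ch0) (chmul ch0 a) = a"
    proof
      fix x show "chmul (chinv ch0) (chmul ch0 a) x = a x"
        using a ch0 mchars_nonzero[OF ch0, of x] by (cases "x = 0") auto
    qed
    show "chmul ch0 (chmul (chinv ch0) a) = a"
    proof
      fix x show "chmul ch0 (chmul (chinv ch0) a) x = a x"
        using a ch0 mchars_nonzero[OF ch0, of x] by (cases "x = 0") auto
    qed
  qed (use ch0 mchars_nonzero[OF ch0, of y] False in auto)
  also have "\<dots> = ch0 y * (\<Sum>ch\<in>mchars. ch y)" by (simp add: sum_distrib_left)
  finally have "(\<Sum>ch\<in>mchars. ch y) = 0" using \<open>ch0 y \<noteq> 1\<close> by (rule eq_zero_if_eq_mult_self)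
  with False show ?thesis by simp
qed

lemma sum_mchars_mult_inverse:
  fixes a u :: "'a::{finite,field}"
  shows "(\<Sum>ch\<in>mchars. ch a * inverse (ch u)) = (if u \<noteq> 0 \<and> a = u then of_nat (CARD('a) - 1) else 0)"
proof (cases "u = 0")
  case False
  have "(\<Sum>ch\<in>mchars. ch a * inverse (ch u)) = (\<Sum>ch\<in>mchars. ch (a * inverse u))"
    by (rule sum.cong) (simp_all add: mchars_mult mchars_inverse)
  also have "\<dots> = (if a * inverse u = 1 then of_nat (CARD('a) - 1) else 0)"
    by (rule sum_mchars_apply)
  finally show ?thesis using False by (simp add: field_simps)
qed simp

section \<open>The quadratic character\<close>

lemma qchar_zero [simp]: "qchar 0 = 0"
  by (simp add: qchar_def)

lemma even_CARD_minus_one: assumes two: "(2::'a::{finite,field}) \<noteq> 0" shows "even (CARD('a) - 1)"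
proof (rule ccontr)
  assume odd: "odd (CARD('a) - 1)"
  let ?M = "CARD('a) - 1"
  have m1: "(-1::'a) \<noteq> 0" by simp
  have "(-1::'a) \<noteq> 1" using two neg_eq_iff_add_eq_0[of "1::'a" 1] by (simp add: one_add_one)
  then have "dlog (-1::'a) \<noteq> 0" using prim_root_power_dlog[OF m1] by (metis power_0)
  have "(prim_root::'a) ^ (2 * dlog (-1::'a)) = prim_root ^ 0"
    using prim_root_power_dlog[OF m1] by (metis power_mult mult.commute power_0 power2_minus power_one)
  then have "(2 * dlog (-1::'a)) mod ?M = 0 mod ?M" by (simp only: prim_root_power_eq_iff)
  then have "?M dvd 2 * dlog (-1::'a)" by auto
  moreover have "coprime ?M 2" using odd by simp
  ultimately have "?M dvd dlog (-1::'a)" by (simp add: coprime_dvd_mult_right_iff)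
  with dlog_less[OF m1] \<open>dlog (-1::'a) \<noteq> 0\<close> show False by (metis dvd_imp_le neq0_conv not_le)
qed

lemma is_square_iff_even_dlog:
  assumes two: "(2::'a::{finite,field}) \<noteq> 0" and x: "(x::'a) \<noteq> 0"
  shows "(\<exists>y. y ^ 2 = x) \<longleftrightarrow> even (dlog x)"
proof
  assume "\<exists>y. y ^ 2 = x"
  then obtain y where y: "y ^ 2 = x" by blast
  with x have "y \<noteq> 0" by auto
  with y have "x = prim_root ^ (2 * dlog y)" by (metis prim_root_power_dlog power_mult mult.commute)
  then have "dlog x = (2 * dlog y) mod (CARD('a) - 1)" using dlog_prim_root_power by metis
  then show "even (dlog x)" using even_CARD_minus_one[OF two] by (auto intro: dvd_mod)
next
  assume "even (dlog x)"
  then obtain k where "dlog x = 2 * k" by blast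
  then have "(prim_root ^ k) ^ 2 = x" using prim_root_power_dlog[OF x] by (metis power_mult mult.commute)
  then show "\<exists>y. y ^ 2 = x" by blast
qed

lemma qchar_eq_char_of_root:
  assumes two: "(2::'a::{finite,field}) \<noteq> 0" shows "(qchar :: 'a \<Rightarrow> complex) = char_of_root (-1)"
  using is_square_iff_even_dlog[OF two] by (auto simp: fun_eq_iff qchar_def char_of_root_def)

lemma qchar_mchars: assumes two: "(2::'a::{finite,field}) \<noteq> 0" shows "(qchar :: 'a \<Rightarrow> complex) \<in> mchars"
  unfolding qchar_eq_char_of_root[OF two]
  by (rule char_of_root_mchars) (use even_CARD_minus_one[OF two] in simp)

lemma chmul_qchar_qchar: "chmul qchar qchar = eps"
  by (auto simp: fun_eq_iff qchar_def eps_def)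

lemma inverse_qchar: "inverse (qchar x) = qchar x"
  by (simp add: qchar_def)

lemma four_nonzero: assumes two: "(2::'a::field) \<noteq> 0" shows "(4::'a) \<noteq> 0"
proof -
  have "(4::'a) = 2 * 2" by simp
  then show ?thesis using no_zero_divisors[OF two two] by simp
qed

lemma qchar_four: assumes two: "(2::'a::{finite,field}) \<noteq> 0" shows "qchar (4::'a) = 1"
proof -
  have "(2::'a) ^ 2 = 4" by simp
  then show ?thesis using four_nonzero[OF two] unfolding qchar_def by metis
qed

lemma chmul_qchar_eq_eps_iff: assumes c: "c \<in> mchars" shows "chmul c qchar = eps \<longleftrightarrow> c = qchar"
proof
  assume h: "chmul c qchar = eps"
  show "c = qchar"
  proof
    fix x
    show "c x = qchar x"
    proof (cases "x = 0")
      case False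
      have "c x * qchar x = 1" using fun_cong[OF h, of x] False by simp
      moreover have "qchar x * qchar x = 1" using False by (simp add: qchar_def)
      ultimately show ?thesis by (metis mult.assoc mult_1_left mult_1_right)
    qed (simp add: c)
  qed
qed (simp add: chmul_qchar_qchar)

lemma chmul_self_eq_eps_iff:
  assumes two: "(2::'a::{finite,field}) \<noteq> 0" and c: "c \<in> mchars"
  shows "chmul c c = (eps :: 'a \<Rightarrow> complex) \<longleftrightarrow> c = eps \<or> c = qchar"
proof
  assume h: "chmul c c = eps"
  have "c prim_root * c prim_root = 1" using fun_cong[OF h, of prim_root] prim_root_nonzero[where 'a='a] by simp
  then have "c prim_root = 1 \<or> c prim_root = -1" by (metis square_eq_1_iff power2_eq_square)
  moreover have "char_of_root 1 = (eps :: 'a \<Rightarrow> complex)" by (auto simp: fun_eq_iff char_of_root_def eps_def)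
  ultimately show "c = eps \<or> c = qchar"
    using mchars_eq_char_of_root[OF c] qchar_eq_char_of_root[OF two] by metis
qed (auto simp: chmul_qchar_qchar)

lemma card_square_roots: assumes two: "(2::'a::{finite,field}) \<noteq> 0"
  shows "of_nat (card {y::'a. y ^ 2 = D}) = 1 + (qchar D :: complex)"
proof (cases "D = 0")
  case False
  show ?thesis
  proof (cases "\<exists>y. y ^ 2 = D")
    case True
    then obtain w where w: "w ^ 2 = D" by blast
    with False have "w \<noteq> 0" by auto
    then have "w \<noteq> - w" using two
      by (metis add_eq_0_iff2 mult_2 mult_eq_0_iff add.inverse_inverse minus_equation_iff)
    moreover have "{y. y ^ 2 = D} = {w, -w}" using w by (auto simp: power2_eq_iff)
    ultimately show ?thesis using True False by (simp add: qchar_def)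
  next
    case False
    then have "{y. y ^ 2 = D} = {}" by auto
    with False \<open>D \<noteq> 0\<close> show ?thesis by (simp add: qchar_def)
  qed
qed simp

lemma sum_UNIV_square: assumes two: "(2::'a::{finite,field}) \<noteq> 0"
  shows "(\<Sum>y\<in>UNIV. f ((y::'a) ^ 2)) = (\<Sum>D\<in>UNIV. (1 + qchar D) * (f D :: complex))"
proof -
  have "(\<Sum>y\<in>UNIV. f ((y::'a) ^ 2)) = (\<Sum>D\<in>UNIV. \<Sum>y\<in>{y. y ^ 2 = D}. f (y ^ 2))"
    using sum.group[of "UNIV::'a set" UNIV "\<lambda>y. y ^ 2" "\<lambda>y. f (y ^ 2)"] by simp
  also have "\<dots> = (\<Sum>D\<in>UNIV. of_nat (card {y::'a. y ^ 2 = D}) * f D)"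
    by (rule sum.cong) auto
  finally show ?thesis using card_square_roots[OF two] by simp
qed


section \<open>Gauss sums and Jacobi sums\<close>

definition jacobi :: "('a::{finite,field} \<Rightarrow> complex) \<Rightarrow> ('a \<Rightarrow> complex) \<Rightarrow> complex" where
  "jacobi a b = (\<Sum>x\<in>UNIV. a x * b (1 - x))"

lemma sum_mchars_convolution:
  assumes a: "a \<in> mchars" and b: "b \<in> mchars" and ne: "chmul a b \<noteq> eps"
  shows "(\<Sum>s\<in>UNIV. a s * b (r - s)) = chmul a b r * jacobi a b"
proof (cases "r = 0")
  case True
  have "b (r - s) = b (-1) * b s" for s
    using True mchars_mult[OF b, of "-1" s] by simp
  then have "(\<Sum>s\<in>UNIV. a s * b (r - s)) = b (-1) * (\<Sum>s\<in>UNIV. chmul a b s)"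
    by (simp add: sum_distrib_left mult_ac)
  also have "(\<Sum>s\<in>UNIV. chmul a b s) = 0" using sum_UNIV_mchar[OF chmul_mchars[OF a b]] ne by simp
  finally show ?thesis using True a b by simp
next
  case False
  have "(\<Sum>s\<in>UNIV. a s * b (r - s)) = (\<Sum>x\<in>UNIV. a (r * x) * b (r - r * x))"
    using sum_UNIV_scale[OF False, of "\<lambda>s. a s * b (r - s)"] by simp
  also have "\<dots> = (\<Sum>x\<in>UNIV. (a r * b r) * (a x * b (1 - x)))"
  proof (rule sum.cong[OF refl])
    fix x :: 'a
    have "r - r * x = r * (1 - x)" by (simp add: algebra_simps)
    then have "b (r - r * x) = b r * b (1 - x)" by (simp only: mchars_mult[OF b])
    then show "a (r * x) * b (r - r * x) = (a r * b r) * (a x * b (1 - x))"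
      by (simp add: mchars_mult[OF a] mult_ac)
  qed
  finally show ?thesis by (simp add: jacobi_def sum_distrib_left)
qed

locale add_char =
  fixes \<psi> :: "'a::{finite,field} \<Rightarrow> complex"
  assumes nontriv: "nontriv_add_char \<psi>"
begin

lemma psi_add: "\<psi> (x + y) = \<psi> x * \<psi> y"
  and psi_nonzero: "\<psi> x \<noteq> 0"
  using nontriv unfolding nontriv_add_char_def by blast+

lemma psi_zero [simp]: "\<psi> 0 = 1"
  using psi_add[of 0 0] psi_nonzero[of 0] by simp

lemma psi_minus: "\<psi> (- x) = inverse (\<psi> x)"
proof -
  have "\<psi> (- x) * \<psi> x = 1" using psi_add[of "-x" x] by simp
  then show ?thesis by (metis inverse_unique mult.commute)
qed

lemma psi_diff: "\<psi> (x - y) = \<psi> x * inverse (\<psi> y)"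
  using psi_add[of x "-y"] psi_minus[of y] by simp

lemma psi_sum: "\<psi> (\<Sum>i\<in>I. f i) = (\<Prod>i\<in>I. \<psi> (f i))"
proof (cases "finite I")
  case True then show ?thesis by (induction I rule: finite_induct) (simp_all add: psi_add)
qed simp

lemma sum_psi_mult: "(\<Sum>x\<in>UNIV. \<psi> (a * x)) = (if a = 0 then of_nat CARD('a) else 0)"
proof (cases "a = 0")
  case False
  obtain b where b: "\<psi> b \<noteq> 1" using nontriv unfolding nontriv_add_char_def by blast
  have "(\<Sum>x\<in>UNIV. \<psi> x) = (\<Sum>x\<in>UNIV. \<psi> (x + b))"
    by (rule sum_UNIV_reindex[symmetric, of "\<lambda>x. x - b"]) auto
  also have "\<dots> = \<psi> b * (\<Sum>x\<in>UNIV. \<psi> x)"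
    by (simp add: psi_add sum_distrib_left mult.commute)
  finally have "(\<Sum>x\<in>UNIV. \<psi> x) = 0" using b by (rule eq_zero_if_eq_mult_self)
  with False show ?thesis using sum_UNIV_scale[OF False, of \<psi>] by simp
qed simp

definition gauss_sum :: "('a \<Rightarrow> complex) \<Rightarrow> complex" where
  "gauss_sum c = (\<Sum>x\<in>UNIV. \<psi> x * c x)"

lemma gauss_eq_neg_gauss_sum: assumes "c \<in> mchars" shows "gauss \<psi> c = - gauss_sum c"
proof -
  have "gauss_sum c = \<psi> 0 * c 0 + (\<Sum>x\<in>UNIV - {0}. \<psi> x * c x)"
    unfolding gauss_sum_def by (rule sum.remove) auto
  with assms show ?thesis by (simp add: gauss_def)
qed

lemma gauss_sum_eps: "gauss_sum eps = -1"
proof -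
  have "gauss_sum eps = (\<Sum>x\<in>UNIV - {0}. \<psi> x)"
    unfolding gauss_sum_def by (rule sum.mono_neutral_cong_right) auto
  also have "\<dots> = (\<Sum>x\<in>UNIV. \<psi> (1 * x)) - \<psi> 0"
    using sum.remove[of "UNIV::'a set" 0 \<psi>] by simp
  finally show ?thesis using sum_psi_mult[of 1] by simp
qed

lemma gauss_eps [simp]: "gauss \<psi> eps = 1"
  using gauss_eq_neg_gauss_sum[OF eps_mchars] gauss_sum_eps by simp

lemma gauss0_eps: "gauss0 \<psi> eps = of_nat CARD('a)"
  by (simp add: gauss0_def)

lemma sum_mchar_psi_scaled: assumes c: "c \<in> mchars" and z: "(z::'a) \<noteq> 0"
  shows "(\<Sum>t\<in>UNIV. c t * \<psi> (z * t)) = inverse (c z) * gauss_sum c"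
proof -
  have "(\<Sum>t\<in>UNIV. c t * \<psi> (z * t)) = (\<Sum>s\<in>UNIV. c (s / z) * \<psi> (z * (s / z)))"
    by (rule sum_UNIV_reindex[symmetric, of "\<lambda>x. x * z"]) (use z in auto)
  also have "\<dots> = (\<Sum>s\<in>UNIV. inverse (c z) * (\<psi> s * c s))"
    by (rule sum.cong) (simp_all add: z mchars_mult[OF c] mchars_inverse[OF c] divide_inverse mult_ac)
  finally show ?thesis by (simp add: gauss_sum_def sum_distrib_left)
qed

lemma sum_nontriv_mchar_psi_scaled: assumes c: "c \<in> mchars" and ne: "c \<noteq> eps"
  shows "(\<Sum>t\<in>UNIV. c t * \<psi> (z * t)) = chinv c z * gauss_sum c"
proof (cases "z = 0")
  case True
  then show ?thesis using sum_UNIV_mchar[OF c] ne c by simp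
qed (simp add: sum_mchar_psi_scaled[OF c])

lemma gauss_sum_mult_chinv: assumes c: "c \<in> mchars" and ne: "c \<noteq> eps"
  shows "gauss_sum c * gauss_sum (chinv c) = c (-1) * of_nat CARD('a)"
proof -
  have inner: "\<psi> t * inverse (c t) * gauss_sum c = (\<Sum>u\<in>UNIV. c u * \<psi> (t * (1 + u)))" for t
  proof -
    have "\<psi> t * inverse (c t) * gauss_sum c = \<psi> t * (\<Sum>u\<in>UNIV. c u * \<psi> (t * u))"
      using sum_nontriv_mchar_psi_scaled[OF c ne, of t] by simp
    also have "\<dots> = (\<Sum>u\<in>UNIV. c u * \<psi> (t * (1 + u)))"
      by (simp add: sum_distrib_left distrib_left psi_add mult_ac)
    finally show ?thesis .
  qed
  have "gauss_sum c * gauss_sum (chinv c) = (\<Sum>t\<in>UNIV. \<psi> t * inverse (c t) * gauss_sum c)"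
    by (simp add: gauss_sum_def sum_distrib_left sum_distrib_right mult_ac)
  also have "\<dots> = (\<Sum>u\<in>UNIV. c u * (\<Sum>t\<in>UNIV. \<psi> ((1 + u) * t)))"
    unfolding inner by (subst sum.swap) (simp add: sum_distrib_left mult_ac)
  also have "\<dots> = (\<Sum>u\<in>UNIV. if u = -1 then c u * of_nat CARD('a) else 0)"
    by (rule sum.cong) (auto simp: sum_psi_mult add_eq_0_iff)
  finally show ?thesis by simp
qed

lemma gauss_sum_nonzero: assumes c: "c \<in> mchars" shows "gauss_sum c \<noteq> 0"
proof (cases "c = eps")
  case False
  then have "gauss_sum c * gauss_sum (chinv c) \<noteq> 0"
    using gauss_sum_mult_chinv[OF c False] mchars_nonzero[OF c, of "-1"] by simp
  then show ?thesis by auto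
qed (simp add: gauss_sum_eps)

lemma gauss_nonzero: "c \<in> mchars \<Longrightarrow> gauss \<psi> c \<noteq> 0"
  using gauss_sum_nonzero gauss_eq_neg_gauss_sum by simp

lemma gauss0_nonzero: "c \<in> mchars \<Longrightarrow> gauss0 \<psi> c \<noteq> 0"
  using gauss_nonzero by (simp add: gauss0_def)

lemma gauss0_reflection: assumes c: "c \<in> mchars"
  shows "gauss0 \<psi> c * (c (-1) * gauss \<psi> (chinv c)) = of_nat CARD('a)"
proof (cases "c = eps")
  case False
  have "gauss0 \<psi> c * (c (-1) * gauss \<psi> (chinv c)) = c (-1) * (gauss_sum c * gauss_sum (chinv c))"
    using False c by (simp add: gauss0_def gauss_eq_neg_gauss_sum)
  also have "\<dots> = (c (-1) * c (-1)) * of_nat CARD('a)" using gauss_sum_mult_chinv[OF c False] by simp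
  finally show ?thesis using mchars_minus_one_squared[OF c] by simp
qed (simp add: gauss0_def)

lemma inverse_poch0: assumes e: "e \<in> mchars" and v: "v \<in> mchars"
  shows "1 / poch0 \<psi> e v = gauss0 \<psi> e * chmul e v (-1) * gauss \<psi> (chinv (chmul e v)) / of_nat CARD('a)"
  using gauss0_reflection[OF chmul_mchars[OF e v]] gauss0_nonzero[OF chmul_mchars[OF e v]]
  by (simp add: poch0_def field_simps)

lemma gauss_sum_mult_eq_jacobi:
  assumes a: "a \<in> mchars" and b: "b \<in> mchars" and ne: "chmul a b \<noteq> eps"
  shows "gauss_sum a * gauss_sum b = gauss_sum (chmul a b) * jacobi a b"
proof -
  have "gauss_sum a * gauss_sum b = (\<Sum>s\<in>UNIV. \<Sum>t\<in>UNIV. \<psi> s * a s * (\<psi> t * b t))"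
    unfolding gauss_sum_def by (rule sum_product)
  also have "\<dots> = (\<Sum>s\<in>UNIV. \<Sum>r\<in>UNIV. \<psi> s * a s * (\<psi> (r - s) * b (r - s)))"
  proof (rule sum.cong[OF refl])
    fix s :: 'a
    show "(\<Sum>t\<in>UNIV. \<psi> s * a s * (\<psi> t * b t)) = (\<Sum>r\<in>UNIV. \<psi> s * a s * (\<psi> (r - s) * b (r - s)))"
      by (rule sum_UNIV_reindex[symmetric, of "\<lambda>x. x + s"]) auto
  qed
  also have "\<dots> = (\<Sum>s\<in>UNIV. \<Sum>r\<in>UNIV. \<psi> r * (a s * b (r - s)))"
  proof -
    have "\<psi> s * a s * (\<psi> (r - s) * b (r - s)) = \<psi> r * (a s * b (r - s))" for s r
    proof -
      have "\<psi> s * \<psi> (r - s) = \<psi> r" using psi_add[of s "r - s"] by simp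
      then show ?thesis by (metis mult.assoc mult.left_commute)
    qed
    then show ?thesis by (simp only:)
  qed
  also have "\<dots> = (\<Sum>r\<in>UNIV. \<psi> r * (\<Sum>s\<in>UNIV. a s * b (r - s)))"
    by (subst sum.swap) (simp only: sum_distrib_left)
  also have "\<dots> = gauss_sum (chmul a b) * jacobi a b"
    by (simp add: sum_mchars_convolution[OF a b ne] gauss_sum_def sum_distrib_right mult.assoc)
  finally show ?thesis .
qed

end

locale add_char_odd = add_char +
  assumes two_nonzero: "(2::'a) \<noteq> 0"
begin

lemma qchar_in_mchars: "(qchar :: 'a \<Rightarrow> complex) \<in> mchars"
  by (rule qchar_mchars[OF two_nonzero])

lemma sum_psi_square: assumes t: "(t::'a) \<noteq> 0"
  shows "(\<Sum>y\<in>UNIV. \<psi> (t * y ^ 2)) = qchar t * gauss_sum qchar"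
proof -
  have "(\<Sum>y\<in>UNIV. \<psi> (t * y ^ 2)) = (\<Sum>D\<in>UNIV. \<psi> (t * D)) + (\<Sum>D\<in>UNIV. qchar D * \<psi> (t * D))"
    using sum_UNIV_square[OF two_nonzero, of "\<lambda>D. \<psi> (t * D)"] by (simp add: distrib_right sum.distrib)
  also have "(\<Sum>D\<in>UNIV. qchar D * \<psi> (t * D)) = inverse (qchar t) * gauss_sum qchar"
    by (rule sum_mchar_psi_scaled[OF qchar_in_mchars t])
  finally show ?thesis using sum_psi_mult[of t] t by (simp add: inverse_qchar)
qed

lemma sum_psi_quadratic: assumes t: "(t::'a) \<noteq> 0"
  shows "(\<Sum>z\<in>UNIV. \<psi> (t * z ^ 2 + z)) = \<psi> (- (1 / (4 * t))) * (qchar t * gauss_sum qchar)"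
proof -
  have "(\<Sum>z\<in>UNIV. \<psi> (t * z ^ 2 + z)) = (\<Sum>w\<in>UNIV. \<psi> (t * (w - 1 / (2 * t)) ^ 2 + (w - 1 / (2 * t))))"
    by (rule sum_UNIV_reindex[symmetric, of "\<lambda>x. x + 1 / (2 * t)"]) auto
  also have "\<dots> = (\<Sum>w\<in>UNIV. \<psi> (- (1 / (4 * t))) * \<psi> (t * w ^ 2))"
  proof (rule sum.cong[OF refl])
    fix w :: 'a
    have "(8::'a) = 2 * 4" by simp
    then have "(8::'a) \<noteq> 0" using no_zero_divisors[OF two_nonzero four_nonzero[OF two_nonzero]] by simp
    then have "t * (w - 1 / (2 * t)) ^ 2 + (w - 1 / (2 * t)) = - (1 / (4 * t)) + t * w ^ 2"
      using t two_nonzero four_nonzero[OF two_nonzero] by (simp add: field_simps power2_eq_square)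
    then show "\<psi> (t * (w - 1 / (2 * t)) ^ 2 + (w - 1 / (2 * t))) = \<psi> (- (1 / (4 * t))) * \<psi> (t * w ^ 2)"
      by (simp only: psi_add)
  qed
  also have "\<dots> = \<psi> (- (1 / (4 * t))) * (\<Sum>w\<in>UNIV. \<psi> (t * w ^ 2))"
    by (simp only: sum_distrib_left)
  finally show ?thesis by (simp only: sum_psi_square[OF t])
qed

lemma jacobi_self: fixes c :: "'a \<Rightarrow> complex" assumes c: "c \<in> mchars" and ne: "c \<noteq> eps"
  shows "jacobi c c = inverse (c 4) * jacobi c qchar"
proof -
  have half: "c ((1 + y) / 2) * c (1 - (1 + y) / 2) = inverse (c 4) * c (1 - y ^ 2)" for y :: 'a
  proof -
    have "(1 + y) / 2 * (1 - (1 + y) / 2) = (1 - y ^ 2) / 4"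
      using two_nonzero four_nonzero[OF two_nonzero] by (simp add: field_simps power2_eq_square)
    then have "c ((1 + y) / 2) * c (1 - (1 + y) / 2) = c ((1 - y ^ 2) / 4)"
      by (simp only: mchars_mult[OF c, symmetric])
    then show ?thesis by (simp only: divide_inverse mchars_mult[OF c] mchars_inverse[OF c] mult.commute)
  qed
  have "jacobi c c = (\<Sum>y\<in>UNIV. c ((1 + y) / 2) * c (1 - (1 + y) / 2))"
    unfolding jacobi_def
    by (rule sum_UNIV_reindex[symmetric, of "\<lambda>x. 2 * x - 1"]) (use two_nonzero in \<open>simp_all add: field_simps\<close>)
  also have "\<dots> = inverse (c 4) * (\<Sum>y\<in>UNIV. c (1 - y ^ 2))"
    by (simp only: half sum_distrib_left)
  also have "(\<Sum>y\<in>UNIV. c (1 - y ^ 2)) = (\<Sum>D\<in>UNIV. (1 + qchar D) * c (1 - D))"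
    by (rule sum_UNIV_square[OF two_nonzero])
  also have "\<dots> = (\<Sum>D\<in>UNIV. c (1 - D)) + (\<Sum>D\<in>UNIV. qchar D * c (1 - D))"
    by (simp only: distrib_right sum.distrib mult_1)
  also have "(\<Sum>D\<in>UNIV. c (1 - D)) = (\<Sum>x\<in>UNIV. c x)"
    by (rule sum_UNIV_reindex[of "\<lambda>x. 1 - x"]) auto
  also have "\<dots> = 0" using sum_UNIV_mchar[OF c] ne by simp
  also have "(\<Sum>D\<in>UNIV. qchar D * c (1 - D)) = (\<Sum>x\<in>UNIV. qchar (1 - x) * c (1 - (1 - x)))"
    by (rule sum_UNIV_reindex[symmetric, of "\<lambda>x. 1 - x"]) auto
  also have "\<dots> = jacobi c qchar"
    unfolding jacobi_def by (rule sum.cong) (simp_all add: mult.commute)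
  finally show ?thesis by simp
qed

text \<open>The case m = 2 of the Hasse-Davenport product formula.\<close>

lemma gauss_duplication: assumes c: "c \<in> mchars"
  shows "gauss \<psi> c * gauss \<psi> (chmul c qchar) = inverse (c 4) * gauss \<psi> (chmul c c) * gauss \<psi> qchar"
proof -
  consider "c = eps" | "c = qchar" | "c \<noteq> eps" "chmul c c \<noteq> eps" "chmul c qchar \<noteq> eps"
    using chmul_self_eq_eps_iff[OF two_nonzero c] chmul_qchar_eq_eps_iff[OF c] by blast
  then show ?thesis
  proof cases
    case 1 then show ?thesis using four_nonzero[OF two_nonzero] qchar_in_mchars by simp
  next
    case 2 then show ?thesis
      using qchar_four[OF two_nonzero] qchar_in_mchars by (simp add: chmul_qchar_qchar mult.commute)
  next
    case 3
    have "gauss_sum c * (gauss_sum c * gauss_sum (chmul c qchar))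
        = gauss_sum (chmul c qchar) * gauss_sum (chmul c c) * jacobi c c"
      using gauss_sum_mult_eq_jacobi[OF c c 3(2)] by (simp add: mult_ac)
    also have "\<dots> = inverse (c 4) * gauss_sum (chmul c c) * (gauss_sum (chmul c qchar) * jacobi c qchar)"
      using jacobi_self[OF c 3(1)] by (simp add: mult_ac)
    also have "\<dots> = gauss_sum c * (inverse (c 4) * gauss_sum (chmul c c) * gauss_sum qchar)"
      using gauss_sum_mult_eq_jacobi[OF c qchar_in_mchars 3(3)] by (simp add: mult_ac)
    finally have "gauss_sum c * gauss_sum (chmul c qchar) = inverse (c 4) * gauss_sum (chmul c c) * gauss_sum qchar"
      using gauss_sum_nonzero[OF c] by simp
    then show ?thesis using c qchar_in_mchars by (simp add: gauss_eq_neg_gauss_sum)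
  qed
qed

lemma gauss0_duplication: assumes b: "b \<in> mchars" and ne: "b \<noteq> eps"
  shows "gauss0 \<psi> (chmul b qchar) * gauss \<psi> b = inverse (b 4) * gauss0 \<psi> (chmul b b) * gauss \<psi> qchar"
proof (cases "b = qchar")
  case True
  then show ?thesis using qchar_four[OF two_nonzero] by (simp add: chmul_qchar_qchar gauss0_def mult.commute)
next
  case False
  then have "chmul b b \<noteq> eps" "chmul b qchar \<noteq> eps"
    using chmul_self_eq_eps_iff[OF two_nonzero b] chmul_qchar_eq_eps_iff[OF b] ne by blast+
  then show ?thesis using gauss_duplication[OF b] by (simp add: gauss0_def mult.commute)
qed

lemma poch_duplication: assumes a: "a \<in> mchars" and N: "N \<in> mchars"
  shows "poch \<psi> a N * poch \<psi> (chmul a qchar) N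
       = inverse (N 4) * gauss \<psi> (chmul (chmul a a) (chmul N N)) / gauss \<psi> (chmul a a)"
proof -
  let ?X = "gauss \<psi> (chmul (chmul a a) (chmul N N))" and ?Y = "gauss \<psi> (chmul a a)"
    and ?P = "gauss \<psi> qchar"
  have "chmul (chmul a qchar) N = chmul (chmul a N) qchar"
    and "chmul (chmul a N) (chmul a N) = chmul (chmul a a) (chmul N N)"
    by (auto simp: fun_eq_iff mult_ac)
  then have aN: "gauss \<psi> (chmul a N) * gauss \<psi> (chmul (chmul a qchar) N) = inverse (a 4 * N 4) * ?X * ?P"
    using gauss_duplication[OF chmul_mchars[OF a N]] by simp
  have "poch \<psi> a N * poch \<psi> (chmul a qchar) N
      = (gauss \<psi> (chmul a N) * gauss \<psi> (chmul (chmul a qchar) N)) / (gauss \<psi> a * gauss \<psi> (chmul a qchar))"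
    by (simp add: poch_def)
  also have "\<dots> = (inverse (a 4 * N 4) * ?X * ?P) / (inverse (a 4) * ?Y * ?P)"
    by (simp only: aN gauss_duplication[OF a])
  also have "\<dots> = inverse (N 4) * ?X / ?Y"
    using mchars_nonzero[OF a four_nonzero[OF two_nonzero]] gauss_nonzero[OF qchar_in_mchars]
      gauss_nonzero[OF chmul_mchars[OF a a]]
    by (simp add: field_simps)
  finally show ?thesis .
qed

end

section \<open>A finite field analogue of Kummer's second formula\<close>

context add_char
begin

definition kloosterman :: "('a \<Rightarrow> complex) \<Rightarrow> 'a \<Rightarrow> complex" where
  "kloosterman c a = (\<Sum>u\<in>UNIV. c u * \<psi> (u + a / u))"

text \<open>Expanding both Gauss sums, orthogonality of the characters keeps only the terms with u t = y.\<close>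

lemma sum_mchars_gauss_sum_pair: assumes A: "A \<in> mchars" and y: "(y::'a) \<noteq> 0"
  shows "(\<Sum>v\<in>mchars. gauss_sum (chinv (chmul A v)) * gauss_sum (chinv v) * v y)
       = of_nat (CARD('a) - 1) * kloosterman (chinv A) y"
proof -
  let ?q1 = "of_nat (CARD('a) - 1) :: complex"
  have "(\<Sum>v\<in>mchars. gauss_sum (chinv (chmul A v)) * gauss_sum (chinv v) * v y)
      = (\<Sum>v\<in>mchars. \<Sum>u\<in>UNIV. \<Sum>t\<in>UNIV. (\<psi> u * inverse (A u) * \<psi> t) * (v y * inverse (v (u * t))))"
  proof (rule sum.cong[OF refl])
    fix v :: "'a \<Rightarrow> complex" assume v: "v \<in> mchars"
    have "gauss_sum (chinv (chmul A v)) * gauss_sum (chinv v) * v y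
        = (\<Sum>u\<in>UNIV. \<Sum>t\<in>UNIV. (\<psi> u * chinv (chmul A v) u) * (\<psi> t * chinv v t)) * v y"
      unfolding gauss_sum_def by (simp only: sum_product)
    also have "\<dots> = (\<Sum>u\<in>UNIV. \<Sum>t\<in>UNIV. (\<psi> u * chinv (chmul A v) u) * (\<psi> t * chinv v t) * v y)"
      by (simp only: sum_distrib_right)
    also have "\<dots> = (\<Sum>u\<in>UNIV. \<Sum>t\<in>UNIV. (\<psi> u * inverse (A u) * \<psi> t) * (v y * inverse (v (u * t))))"
      by (intro sum.cong refl) (simp add: mchars_mult[OF v] mult_ac)
    finally show "gauss_sum (chinv (chmul A v)) * gauss_sum (chinv v) * v y = \<dots>" .
  qed
  also have "\<dots> = (\<Sum>u\<in>UNIV. \<Sum>t\<in>UNIV. (\<psi> u * inverse (A u) * \<psi> t) *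
      (\<Sum>v\<in>mchars. v y * inverse (v (u * t))))"
    by (subst sum.swap, rule sum.cong[OF refl], subst sum.swap) (simp only: sum_distrib_left)
  also have "\<dots> = (\<Sum>u\<in>UNIV. ?q1 * (inverse (A u) * \<psi> (u + y / u)))"
  proof (rule sum.cong[OF refl])
    fix u :: 'a
    show "(\<Sum>t\<in>UNIV. (\<psi> u * inverse (A u) * \<psi> t) * (\<Sum>v\<in>mchars. v y * inverse (v (u * t))))
        = ?q1 * (inverse (A u) * \<psi> (u + y / u))"
    proof (cases "u = 0")
      case False
      have "(u * t \<noteq> 0 \<and> y = u * t) = (t = y / u)" for t
        using False y by (auto simp: field_simps)
      then have "(\<Sum>t\<in>UNIV. (\<psi> u * inverse (A u) * \<psi> t) * (\<Sum>v\<in>mchars. v y * inverse (v (u * t))))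
          = (\<Sum>t\<in>UNIV. if t = y / u then (\<psi> u * inverse (A u) * \<psi> t) * ?q1 else 0)"
        by (intro sum.cong refl) (simp add: sum_mchars_mult_inverse)
      then show ?thesis by (simp add: psi_add mult_ac)
    qed (use A in simp)
  qed
  finally show ?thesis by (simp add: kloosterman_def sum_distrib_left)
qed

lemma sum_mchars_gauss_sum_triple_eq_kloosterman: assumes b: "b \<in> mchars" and w: "(w::'a) \<noteq> 0"
  shows "(\<Sum>v\<in>mchars. gauss_sum (chmul b v) * gauss_sum (chinv (chmul (chmul b b) v)) * gauss_sum (chinv v) * v w)
       = of_nat (CARD('a) - 1) * (\<Sum>a\<in>UNIV. \<psi> a * b a * kloosterman (chinv (chmul b b)) (a * w))"
proof -
  let ?q1 = "of_nat (CARD('a) - 1) :: complex"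
  let ?G = "\<lambda>v. gauss_sum (chinv (chmul (chmul b b) v)) * gauss_sum (chinv v)"
  have bb: "chmul b b \<in> mchars" using b by simp
  have "(\<Sum>v\<in>mchars. gauss_sum (chmul b v) * ?G v * v w)
      = (\<Sum>v\<in>mchars. \<Sum>a\<in>UNIV. \<psi> a * b a * (?G v * v (a * w)))"
  proof (rule sum.cong[OF refl])
    fix v :: "'a \<Rightarrow> complex" assume v: "v \<in> mchars"
    show "gauss_sum (chmul b v) * ?G v * v w = (\<Sum>a\<in>UNIV. \<psi> a * b a * (?G v * v (a * w)))"
      unfolding gauss_sum_def[of "chmul b v"] sum_distrib_right
      by (rule sum.cong[OF refl]) (simp add: mchars_mult[OF v] mult_ac)
  qed
  also have "\<dots> = (\<Sum>a\<in>UNIV. \<psi> a * b a * (\<Sum>v\<in>mchars. ?G v * v (a * w)))"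
    by (subst sum.swap) (simp only: sum_distrib_left)
  also have "\<dots> = (\<Sum>a\<in>UNIV. ?q1 * (\<psi> a * b a * kloosterman (chinv (chmul b b)) (a * w)))"
  proof (rule sum.cong[OF refl])
    fix a :: 'a
    show "\<psi> a * b a * (\<Sum>v\<in>mchars. ?G v * v (a * w)) = ?q1 * (\<psi> a * b a * kloosterman (chinv (chmul b b)) (a * w))"
      using sum_mchars_gauss_sum_pair[OF bb, of "a * w"] w b by (cases "a = 0") (simp_all add: mult_ac)
  qed
  finally show ?thesis by (simp only: sum_distrib_left mult.assoc)
qed

text \<open>The sum over a that remains after the pair sum has been evaluated is again a Gauss sum.\<close>

lemma sum_mchars_gauss_sum_triple: assumes b: "b \<in> mchars" and ne: "b \<noteq> eps" and w: "(w::'a) \<noteq> 0"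
  shows "(\<Sum>v\<in>mchars. gauss_sum (chmul b v) * gauss_sum (chinv (chmul (chmul b b) v)) * gauss_sum (chinv v) * v w)
       = of_nat (CARD('a) - 1) * gauss_sum b * (\<Sum>c\<in>UNIV. \<psi> c * inverse (b (c * (c + w))))"
proof -
  let ?q1 = "of_nat (CARD('a) - 1) :: complex"
  have "\<psi> a * b a * kloosterman (chinv (chmul b b)) (a * w)
      = (\<Sum>c\<in>UNIV. \<psi> c * (inverse (b c) * inverse (b c)) * (b a * \<psi> ((1 + w / c) * a)))" for a
  proof -
    have "\<psi> a * b a * (chinv (chmul b b) c * \<psi> (c + a * w / c))
        = \<psi> c * (inverse (b c) * inverse (b c)) * (b a * \<psi> ((1 + w / c) * a))" for c
    proof -
      have "(1 + w / c) * a = a + a * w / c" by (simp add: algebra_simps)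
      then show ?thesis by (simp add: psi_add mult_ac)
    qed
    then show ?thesis unfolding kloosterman_def sum_distrib_left by (simp only:)
  qed
  then have "(\<Sum>v\<in>mchars. gauss_sum (chmul b v) * gauss_sum (chinv (chmul (chmul b b) v)) * gauss_sum (chinv v) * v w)
      = ?q1 * (\<Sum>a\<in>UNIV. \<Sum>c\<in>UNIV. \<psi> c * (inverse (b c) * inverse (b c)) * (b a * \<psi> ((1 + w / c) * a)))"
    by (simp only: sum_mchars_gauss_sum_triple_eq_kloosterman[OF b w])
  also have "\<dots> = ?q1 * (\<Sum>c\<in>UNIV. \<psi> c * (inverse (b c) * inverse (b c)) * (\<Sum>a\<in>UNIV. b a * \<psi> ((1 + w / c) * a)))"
    by (subst sum.swap) (simp only: sum_distrib_left)
  also have "\<dots> = ?q1 * gauss_sum b * (\<Sum>c\<in>UNIV. \<psi> c * inverse (b (c * (c + w))))"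
  proof -
    have "\<psi> c * (inverse (b c) * inverse (b c)) * (chinv b (1 + w / c) * gauss_sum b)
        = gauss_sum b * (\<psi> c * inverse (b (c * (c + w))))" for c
    proof (cases "c = 0")
      case False
      then have "c * (c + w) = c * (c * (1 + w / c))" by (simp add: field_simps)
      then have "b (c * (c + w)) = b c * (b c * b (1 + w / c))" by (simp only: mchars_mult[OF b])
      then show ?thesis by (simp add: mult_ac)
    qed (use b in simp)
    then show ?thesis
      by (simp only: sum_nontriv_mchar_psi_scaled[OF b ne] sum_distrib_left mult.assoc)
  qed
  finally show ?thesis by (simp only: mult.assoc)
qed

text \<open>These are (1 - q) times the finite field hypergeometric functions 0F1(gamma; z) and
  1F1(beta; gamma; z), without the normalising factor.\<close>

definition hyp0F1 :: "('a \<Rightarrow> complex) \<Rightarrow> 'a \<Rightarrow> complex" where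
  "hyp0F1 \<gamma> z = (\<Sum>v\<in>mchars. v z / (poch0 \<psi> \<gamma> v * poch0 \<psi> eps v))"

definition hyp1F1 :: "('a \<Rightarrow> complex) \<Rightarrow> ('a \<Rightarrow> complex) \<Rightarrow> 'a \<Rightarrow> complex" where
  "hyp1F1 \<beta> \<gamma> z = (\<Sum>v\<in>mchars. poch \<psi> \<beta> v / (poch0 \<psi> \<gamma> v * poch0 \<psi> eps v) * v z)"

lemma inverse_poch0_eps: assumes v: "v \<in> mchars"
  shows "1 / poch0 \<psi> eps v = v (-1) * gauss \<psi> (chinv v)"
  using inverse_poch0[OF eps_mchars v] v by (simp add: gauss0_eps)

lemma hyp0F1_eq_kloosterman: assumes c: "c \<in> mchars" and y: "y \<noteq> 0"
  shows "hyp0F1 c y = gauss0 \<psi> c * c (-1) / of_nat CARD('a) * of_nat (CARD('a) - 1) * kloosterman (chinv c) y"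
proof -
  let ?C = "gauss0 \<psi> c * c (-1) / of_nat CARD('a)"
  have "v y / (poch0 \<psi> c v * poch0 \<psi> eps v)
      = ?C * (gauss_sum (chinv (chmul c v)) * gauss_sum (chinv v) * v y)" if v: "v \<in> mchars" for v
  proof -
    have "v y / (poch0 \<psi> c v * poch0 \<psi> eps v) = v y * (1 / poch0 \<psi> c v) * (1 / poch0 \<psi> eps v)"
      by simp
    also have "\<dots> = ?C * (v (-1) * v (-1)) * (gauss_sum (chinv (chmul c v)) * gauss_sum (chinv v) * v y)"
      unfolding inverse_poch0[OF c v] inverse_poch0_eps[OF v] using c v
      by (simp add: gauss_eq_neg_gauss_sum mult_ac)
    finally show ?thesis by (simp add: mchars_minus_one_squared[OF v])
  qed
  then have "hyp0F1 c y = ?C * (\<Sum>v\<in>mchars. gauss_sum (chinv (chmul c v)) * gauss_sum (chinv v) * v y)"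
    by (simp add: hyp0F1_def sum_distrib_left)
  then show ?thesis by (simp add: sum_mchars_gauss_sum_pair[OF c y])
qed

lemma hyp1F1_eq_sum_psi: assumes b: "b \<in> mchars" and ne: "b \<noteq> eps" and w: "w \<noteq> 0"
  shows "hyp1F1 b (chmul b b) w = - (gauss0 \<psi> (chmul b b) / (of_nat CARD('a) * gauss \<psi> b)) *
           of_nat (CARD('a) - 1) * gauss_sum b * (\<Sum>c\<in>UNIV. \<psi> c * inverse (b (c * (c + w))))"
proof -
  let ?C = "- (gauss0 \<psi> (chmul b b) / (of_nat CARD('a) * gauss \<psi> b))"
  have bb: "chmul b b \<in> mchars" using b by simp
  have "poch \<psi> b v / (poch0 \<psi> (chmul b b) v * poch0 \<psi> eps v) * v w
      = ?C * (gauss_sum (chmul b v) * gauss_sum (chinv (chmul (chmul b b) v)) * gauss_sum (chinv v) * v w)"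
    if v: "v \<in> mchars" for v
  proof -
    have "poch \<psi> b v / (poch0 \<psi> (chmul b b) v * poch0 \<psi> eps v) * v w
        = gauss \<psi> (chmul b v) / gauss \<psi> b * (1 / poch0 \<psi> (chmul b b) v) * (1 / poch0 \<psi> eps v) * v w"
      by (simp add: poch_def)
    also have "\<dots> = ?C * ((b (-1) * b (-1)) * (v (-1) * v (-1))) *
        (gauss_sum (chmul b v) * gauss_sum (chinv (chmul (chmul b b) v)) * gauss_sum (chinv v) * v w)"
      unfolding inverse_poch0[OF bb v] inverse_poch0_eps[OF v] using b v gauss_nonzero[OF b]
      by (simp add: gauss_eq_neg_gauss_sum field_simps)
    finally show ?thesis by (simp add: mchars_minus_one_squared[OF b] mchars_minus_one_squared[OF v])
  qed
  then have "hyp1F1 b (chmul b b) w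
      = ?C * (\<Sum>v\<in>mchars. gauss_sum (chmul b v) * gauss_sum (chinv (chmul (chmul b b) v)) * gauss_sum (chinv v) * v w)"
    by (simp add: hyp1F1_def sum_distrib_left)
  also have "\<dots> = ?C * (of_nat (CARD('a) - 1) * gauss_sum b * (\<Sum>c\<in>UNIV. \<psi> c * inverse (b (c * (c + w)))))"
    by (simp only: sum_mchars_gauss_sum_triple[OF b ne w])
  finally show ?thesis by (simp only: mult.assoc)
qed

end

context add_char_odd
begin

text \<open>Expanding the inverse of b by a Gauss sum leaves a quadratic Gauss sum in z.\<close>

lemma sum_psi_inverse_mchar_diff_squares_eq_sum_qchar: assumes b: "b \<in> mchars" and ne: "b \<noteq> eps"
  shows "(\<Sum>z\<in>UNIV. \<psi> z * inverse (b (z ^ 2 - x ^ 2)))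
       = gauss_sum qchar / gauss_sum b * (\<Sum>t\<in>UNIV. b t * qchar t * \<psi> (- (x ^ 2 * t)) * \<psi> (- (1 / (4 * t))))"
proof -
  have "(\<Sum>z\<in>UNIV. \<psi> z * inverse (b (z ^ 2 - x ^ 2)))
      = (\<Sum>z\<in>UNIV. \<psi> z * (\<Sum>t\<in>UNIV. b t * \<psi> ((z ^ 2 - x ^ 2) * t))) / gauss_sum b"
    using sum_nontriv_mchar_psi_scaled[OF b ne] gauss_sum_nonzero[OF b]
    by (simp add: sum_divide_distrib)
  also have "(\<Sum>z\<in>UNIV. \<psi> z * (\<Sum>t\<in>UNIV. b t * \<psi> ((z ^ 2 - x ^ 2) * t)))
      = (\<Sum>t\<in>UNIV. b t * \<psi> (- (x ^ 2 * t)) * (\<Sum>z\<in>UNIV. \<psi> (t * z ^ 2 + z)))"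
  proof -
    have "\<psi> z * (b t * \<psi> ((z ^ 2 - x ^ 2) * t)) = b t * \<psi> (- (x ^ 2 * t)) * \<psi> (t * z ^ 2 + z)" for z t
    proof -
      have "\<psi> z * \<psi> ((z ^ 2 - x ^ 2) * t) = \<psi> (- (x ^ 2 * t)) * \<psi> (t * z ^ 2 + z)"
        by (simp only: psi_add[symmetric]) (simp add: algebra_simps)
      then show ?thesis by (metis mult.assoc mult.left_commute)
    qed
    then show ?thesis
      by (simp only: sum_distrib_left) (subst sum.swap, simp only:)
  qed
  also have "\<dots> = (\<Sum>t\<in>UNIV. gauss_sum qchar * (b t * qchar t * \<psi> (- (x ^ 2 * t)) * \<psi> (- (1 / (4 * t)))))"
  proof (rule sum.cong[OF refl])
    fix t :: 'a
    show "b t * \<psi> (- (x ^ 2 * t)) * (\<Sum>z\<in>UNIV. \<psi> (t * z ^ 2 + z))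
        = gauss_sum qchar * (b t * qchar t * \<psi> (- (x ^ 2 * t)) * \<psi> (- (1 / (4 * t))))"
    proof (cases "t = 0")
      case False then show ?thesis by (simp only: sum_psi_quadratic[OF False] mult_ac)
    qed (use b in simp)
  qed
  finally show ?thesis by (simp only: sum_distrib_left[symmetric] times_divide_eq_left mult.commute)
qed

text \<open>Substituting t = -1/(4u) in the sum over t above gives a twisted Kloosterman sum.\<close>

lemma sum_psi_inverse_mchar_diff_squares: assumes b: "b \<in> mchars" and ne: "b \<noteq> eps"
  shows "(\<Sum>z\<in>UNIV. \<psi> z * inverse (b (z ^ 2 - x ^ 2)))
       = gauss_sum qchar / gauss_sum b * (b (-1) * qchar (-1::'a) * inverse (b 4))
         * kloosterman (chinv (chmul b qchar)) (x ^ 2 / 4)"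
proof -
  have inv: "- 1 / (4 * (- 1 / (4 * u))) = (u::'a)" for u
    using four_nonzero[OF two_nonzero] by (cases "u = 0") simp_all
  have "(\<Sum>t\<in>UNIV. b t * qchar t * \<psi> (- (x ^ 2 * t)) * \<psi> (- (1 / (4 * t))))
      = (\<Sum>u\<in>UNIV. b (- 1 / (4 * u)) * qchar (- 1 / (4 * u)) * \<psi> (- (x ^ 2 * (- 1 / (4 * u))))
           * \<psi> (- (1 / (4 * (- 1 / (4 * u))))))"
    by (rule sum_UNIV_reindex[symmetric, of "\<lambda>u. - 1 / (4 * u)"]) (simp_all only: inv)
  also have "\<dots> = (b (-1) * qchar (-1::'a) * inverse (b 4)) * kloosterman (chinv (chmul b qchar)) (x ^ 2 / 4)"
    unfolding kloosterman_def sum_distrib_left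
  proof (rule sum.cong[OF refl])
    fix u :: 'a
    show "b (- 1 / (4 * u)) * qchar (- 1 / (4 * u)) * \<psi> (- (x ^ 2 * (- 1 / (4 * u))))
           * \<psi> (- (1 / (4 * (- 1 / (4 * u)))))
        = b (-1) * qchar (-1::'a) * inverse (b 4) * (chinv (chmul b qchar) u * \<psi> (u + x ^ 2 / 4 / u))"
    proof (cases "u = 0")
      case False
      have "- 1 / (4 * u) = (-1) * inverse 4 * inverse u" by (simp add: field_simps)
      then have "b (- 1 / (4 * u)) = b (-1) * inverse (b 4) * inverse (b u)"
        and "qchar (- 1 / (4 * u)) = qchar (-1::'a) * qchar u"
        by (simp_all only: mchars_mult[OF b] mchars_inverse[OF b] mchars_mult[OF qchar_in_mchars]
            mchars_inverse[OF qchar_in_mchars] qchar_four[OF two_nonzero] inverse_qchar inverse_1 mult_1_right)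
      moreover have "- (x ^ 2 * (- 1 / (4 * u))) = x ^ 2 / 4 / u" "- (1 / (4 * (- 1 / (4 * u)))) = u"
        using False four_nonzero[OF two_nonzero] by (simp_all add: field_simps)
      ultimately show ?thesis by (simp add: psi_add inverse_qchar mult_ac)
    qed (use b in simp)
  qed
  finally show ?thesis
    using sum_psi_inverse_mchar_diff_squares_eq_sum_qchar[OF b ne] by (simp only: mult.assoc)
qed

text \<open>Classically, 1F1(b; 2b; 2x) = exp(x) 0F1(b + 1/2; x^2/4).\<close>

lemma kummer_second_formula: assumes b: "b \<in> mchars" and ne: "b \<noteq> eps"
  shows "hyp0F1 (chmul b qchar) (x ^ 2 / 4) = \<psi> x * hyp1F1 b (chmul b b) (2 * x)"
proof (cases "x = 0")
  case True then show ?thesis by (simp add: hyp0F1_def hyp1F1_def)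
next
  case False
  let ?q = "of_nat CARD('a) :: complex" and ?q1 = "of_nat (CARD('a) - 1) :: complex"
  let ?K = "kloosterman (chinv (chmul b qchar)) (x ^ 2 / 4)"
  have bq: "chmul b qchar \<in> mchars" using b qchar_in_mchars by simp
  have "x ^ 2 / 4 \<noteq> 0" "2 * x \<noteq> 0" using False two_nonzero four_nonzero[OF two_nonzero] by simp_all
  have "(\<Sum>c\<in>UNIV. \<psi> c * inverse (b (c * (c + 2 * x))))
      = (\<Sum>z\<in>UNIV. \<psi> (z - x) * inverse (b ((z - x) * (z - x + 2 * x))))"
    by (rule sum_UNIV_reindex[symmetric, of "\<lambda>z. z + x"]) auto
  also have "\<dots> = inverse (\<psi> x) * (\<Sum>z\<in>UNIV. \<psi> z * inverse (b (z ^ 2 - x ^ 2)))"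
  proof -
    have "(z - x) * (z - x + 2 * x) = z ^ 2 - x ^ 2" for z :: 'a
      by (simp add: algebra_simps power2_eq_square)
    then show ?thesis by (simp add: psi_diff sum_distrib_left mult_ac)
  qed
  finally have R: "\<psi> x * hyp1F1 b (chmul b b) (2 * x) = gauss0 \<psi> (chmul b b) / (?q * gauss_sum b) * ?q1 *
      gauss_sum b * (gauss_sum qchar / gauss_sum b * (b (-1) * qchar (-1::'a) * inverse (b 4)) * ?K)"
    using hyp1F1_eq_sum_psi[OF b ne \<open>2 * x \<noteq> 0\<close>] sum_psi_inverse_mchar_diff_squares[OF b ne, of x]
      psi_nonzero[of x] by (simp add: gauss_eq_neg_gauss_sum[OF b])
  have L: "hyp0F1 (chmul b qchar) (x ^ 2 / 4) = gauss0 \<psi> (chmul b qchar) * (b (-1) * qchar (-1::'a)) / ?q * ?q1 * ?K"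
    using hyp0F1_eq_kloosterman[OF bq \<open>x ^ 2 / 4 \<noteq> 0\<close>] by simp
  have dup: "gauss0 \<psi> (chmul b qchar) = gauss0 \<psi> (chmul b b) * gauss_sum qchar / (gauss_sum b * b 4)"
    using gauss0_duplication[OF b ne] gauss_sum_nonzero[OF b] mchars_nonzero[OF b four_nonzero[OF two_nonzero]]
    by (simp add: gauss_eq_neg_gauss_sum[OF b] gauss_eq_neg_gauss_sum[OF qchar_in_mchars] field_simps)
  show ?thesis
    unfolding L R dup using gauss_sum_nonzero[OF b] mchars_nonzero[OF b four_nonzero[OF two_nonzero]]
    by (simp add: field_simps)
qed

end

section \<open>Reduction of the Lauricella functions to one-variable series\<close>

lemma chprod_apply: "chprod n \<nu> x = (\<Prod>i\<in>{1..n}. \<nu> i x)"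
  by (simp add: chprod_def)

lemma chprod_mchars: assumes n: "1 \<le> n" and v: "\<And>i. i \<in> {1..n} \<Longrightarrow> \<nu> i \<in> mchars"
  shows "chprod n \<nu> \<in> mchars"
proof (rule mcharsI)
  show "chprod n \<nu> 0 = 0" using v[of 1] n by (auto simp: chprod_apply prod_zero_iff intro!: bexI[of _ 1])
  show "chprod n \<nu> x \<noteq> 0" if "x \<noteq> 0" for x :: 'a
    using that by (auto simp: chprod_apply mchars_nonzero v)
  show "chprod n \<nu> (x * y) = chprod n \<nu> x * chprod n \<nu> y" for x y :: 'a
    by (simp add: chprod_apply mchars_mult v prod.distrib)
qed

lemma sum_PiE_sum_prod:
  assumes "finite I" "finite B"
  shows "(\<Sum>\<nu>\<in>I \<rightarrow>\<^sub>E B. \<Sum>s\<in>S. h s * (\<Prod>i\<in>I. f i s (\<nu> i)))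
       = (\<Sum>s\<in>S. h s * (\<Prod>i\<in>I. \<Sum>v\<in>B. f i s v :: 'c::comm_semiring_1))"
  by (subst sum.swap) (simp add: sum_distrib_left prod_sum_PiE[OF assms])

context add_char
begin

lemma FA_summand:
  assumes a: "\<alpha> \<in> mchars" and n: "1 \<le> n" and v: "\<nu> \<in> {1..n} \<rightarrow>\<^sub>E mchars"
  shows "poch \<psi> (chmul \<alpha> \<alpha>) (chprod n \<nu>) * (\<Prod>i\<in>{1..n}. poch \<psi> (\<beta> i) (\<nu> i))
      / (\<Prod>i\<in>{1..n}. poch0 \<psi> (\<gamma> i) (\<nu> i) * poch0 \<psi> eps (\<nu> i)) * (\<Prod>i\<in>{1..n}. \<nu> i (z i))
   = - (1 / gauss \<psi> (chmul \<alpha> \<alpha>)) * (\<Sum>s\<in>UNIV. \<psi> s * (\<alpha> s * \<alpha> s) *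
       (\<Prod>i\<in>{1..n}. poch \<psi> (\<beta> i) (\<nu> i) / (poch0 \<psi> (\<gamma> i) (\<nu> i) * poch0 \<psi> eps (\<nu> i)) * \<nu> i (s * z i)))"
proof -
  have vi: "\<nu> i \<in> mchars" if "i \<in> {1..n}" for i using v that by auto
  define N where "N = chprod n \<nu>"
  have N: "N \<in> mchars" unfolding N_def by (rule chprod_mchars[OF n vi])
  define B where "B = (\<Prod>i\<in>{1..n}. poch \<psi> (\<beta> i) (\<nu> i))"
  define D where "D = (\<Prod>i\<in>{1..n}. poch0 \<psi> (\<gamma> i) (\<nu> i) * poch0 \<psi> eps (\<nu> i))"
  define P where "P = (\<Prod>i\<in>{1..n}. \<nu> i (z i))"
  have prod_summand: "(\<Prod>i\<in>{1..n}. poch \<psi> (\<beta> i) (\<nu> i) / (poch0 \<psi> (\<gamma> i) (\<nu> i) * poch0 \<psi> eps (\<nu> i)) * \<nu> i (s * z i))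
      = N s * (B * P / D)" for s
  proof -
    have "(\<Prod>i\<in>{1..n}. poch \<psi> (\<beta> i) (\<nu> i) / (poch0 \<psi> (\<gamma> i) (\<nu> i) * poch0 \<psi> eps (\<nu> i)) * \<nu> i (s * z i))
        = (\<Prod>i\<in>{1..n}. poch \<psi> (\<beta> i) (\<nu> i) / (poch0 \<psi> (\<gamma> i) (\<nu> i) * poch0 \<psi> eps (\<nu> i)) * (\<nu> i s * \<nu> i (z i)))"
      by (intro prod.cong refl) (simp only: mchars_mult[OF vi])
    then show ?thesis
      unfolding N_def B_def D_def P_def chprod_apply prod.distrib prod_dividef
      by (simp add: divide_inverse mult_ac)
  qed
  have "gauss \<psi> (chmul (chmul \<alpha> \<alpha>) N) = - (\<Sum>s\<in>UNIV. \<psi> s * (\<alpha> s * \<alpha> s) * N s)"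
    using gauss_eq_neg_gauss_sum[of "chmul (chmul \<alpha> \<alpha>) N"] a N by (simp add: gauss_sum_def mult.assoc)
  then have "poch \<psi> (chmul \<alpha> \<alpha>) N * B / D * P
      = - (1 / gauss \<psi> (chmul \<alpha> \<alpha>)) * ((\<Sum>s\<in>UNIV. \<psi> s * (\<alpha> s * \<alpha> s) * N s) * (B * P / D))"
    unfolding poch_def by (simp add: divide_inverse mult_ac)
  also have "\<dots> = - (1 / gauss \<psi> (chmul \<alpha> \<alpha>)) * (\<Sum>s\<in>UNIV. \<psi> s * (\<alpha> s * \<alpha> s) *
       (\<Prod>i\<in>{1..n}. poch \<psi> (\<beta> i) (\<nu> i) / (poch0 \<psi> (\<gamma> i) (\<nu> i) * poch0 \<psi> eps (\<nu> i)) * \<nu> i (s * z i)))"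
    by (simp only: prod_summand sum_distrib_right mult.assoc)
  finally show ?thesis unfolding N_def B_def D_def P_def .
qed

lemma FA_eq_sum_hyp1F1: assumes a: "\<alpha> \<in> mchars" and n: "1 \<le> n"
  shows "FA \<psi> n (chmul \<alpha> \<alpha>) \<beta> \<gamma> z = 1 / (1 - of_nat CARD('a)) ^ n * (- (1 / gauss \<psi> (chmul \<alpha> \<alpha>)) *
           (\<Sum>s\<in>UNIV. \<psi> s * (\<alpha> s * \<alpha> s) * (\<Prod>i\<in>{1..n}. hyp1F1 (\<beta> i) (\<gamma> i) (s * z i))))"
  unfolding FA_def hyp1F1_def
  by (subst sum.cong[OF refl FA_summand[OF a n]], assumption)
    (simp only: sum_distrib_left[symmetric], rule arg_cong[where f = "\<lambda>x. _ * (_ * x)"],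
      rule sum_PiE_sum_prod, simp_all)

lemma sum_psi_mchar_squared_scale: assumes a: "\<alpha> \<in> mchars" and c: "c \<noteq> 0"
  shows "(\<Sum>s\<in>UNIV. \<psi> (c * s) * (\<alpha> s * \<alpha> s) * f (c * s)) = (chinv \<alpha> c)^2 * (\<Sum>t\<in>UNIV. \<psi> t * (\<alpha> t * \<alpha> t) * f t)"
proof -
  have "\<psi> (c * s) * (\<alpha> s * \<alpha> s) * f (c * s)
      = (chinv \<alpha> c)^2 * (\<psi> (c * s) * (\<alpha> (c * s) * \<alpha> (c * s)) * f (c * s))" for s
    using mchars_nonzero[OF a c] by (simp add: mchars_mult[OF a] power2_eq_square field_simps)
  then have "(\<Sum>s\<in>UNIV. \<psi> (c * s) * (\<alpha> s * \<alpha> s) * f (c * s))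
      = (chinv \<alpha> c)^2 * (\<Sum>s\<in>UNIV. \<psi> (c * s) * (\<alpha> (c * s) * \<alpha> (c * s)) * f (c * s))"
    by (simp only: sum_distrib_left)
  also have "\<dots> = (chinv \<alpha> c)^2 * (\<Sum>t\<in>UNIV. \<psi> t * (\<alpha> t * \<alpha> t) * f t)"
    using sum_UNIV_scale[OF c, of "\<lambda>t. \<psi> t * (\<alpha> t * \<alpha> t) * f t"] by simp
  finally show ?thesis .
qed

end

context add_char_odd
begin

text \<open>Duplication turns the coefficient of FC into a single Gauss sum over s, and the factor
  N(s)^2 N(4)^-1 it produces is absorbed by the monomials in the lam i ^ 2.\<close>

lemma FC_summand:
  assumes a: "\<alpha> \<in> mchars" and n: "1 \<le> n" and v: "\<nu> \<in> {1..n} \<rightarrow>\<^sub>E mchars"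
  shows "poch \<psi> \<alpha> (chprod n \<nu>) * poch \<psi> (chmul \<alpha> qchar) (chprod n \<nu>)
      / (\<Prod>i\<in>{1..n}. poch0 \<psi> (\<gamma> i) (\<nu> i) * poch0 \<psi> eps (\<nu> i)) * (\<Prod>i\<in>{1..n}. \<nu> i ((lam i)^2))
   = - (1 / gauss \<psi> (chmul \<alpha> \<alpha>)) * (\<Sum>s\<in>UNIV. \<psi> s * (\<alpha> s * \<alpha> s) *
       (\<Prod>i\<in>{1..n}. \<nu> i ((s * lam i)^2 / 4) / (poch0 \<psi> (\<gamma> i) (\<nu> i) * poch0 \<psi> eps (\<nu> i))))"
proof -
  have vi: "\<nu> i \<in> mchars" if "i \<in> {1..n}" for i using v that by auto
  define N where "N = chprod n \<nu>"
  have N: "N \<in> mchars" unfolding N_def by (rule chprod_mchars[OF n vi])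
  define D where "D = (\<Prod>i\<in>{1..n}. poch0 \<psi> (\<gamma> i) (\<nu> i) * poch0 \<psi> eps (\<nu> i))"
  define P where "P = (\<Prod>i\<in>{1..n}. \<nu> i ((lam i)^2))"
  have monomial: "(\<Prod>i\<in>{1..n}. \<nu> i ((s * lam i)^2 / 4)) = N s * (N s * (P * inverse (N 4)))" for s
  proof -
    have "(s * l) ^ 2 / 4 = s * (s * (l ^ 2 * inverse 4))" for l :: 'a
      by (simp only: power_mult_distrib divide_inverse power2_eq_square mult_ac)
    then have "(\<Prod>i\<in>{1..n}. \<nu> i ((s * lam i)^2 / 4))
        = (\<Prod>i\<in>{1..n}. \<nu> i s * (\<nu> i s * (\<nu> i ((lam i)^2) * inverse (\<nu> i 4))))"
      by (intro prod.cong refl) (simp only: mchars_mult[OF vi] mchars_inverse[OF vi])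
    then show ?thesis
      unfolding N_def P_def chprod_apply prod.distrib prod_inversef[symmetric] by (simp only: comp_def)
  qed
  have "gauss \<psi> (chmul (chmul \<alpha> \<alpha>) (chmul N N)) = - (\<Sum>s\<in>UNIV. \<psi> s * (\<alpha> s * \<alpha> s) * (N s * N s))"
    using gauss_eq_neg_gauss_sum[of "chmul (chmul \<alpha> \<alpha>) (chmul N N)"] a N by (simp add: gauss_sum_def mult.assoc)
  then have "poch \<psi> \<alpha> N * poch \<psi> (chmul \<alpha> qchar) N / D * P
      = inverse (N 4) * - (\<Sum>s\<in>UNIV. \<psi> s * (\<alpha> s * \<alpha> s) * (N s * N s)) / gauss \<psi> (chmul \<alpha> \<alpha>) / D * P"
    by (simp only: poch_duplication[OF a N])
  also have "\<dots> = - (1 / gauss \<psi> (chmul \<alpha> \<alpha>)) * ((\<Sum>s\<in>UNIV. \<psi> s * (\<alpha> s * \<alpha> s) * (N s * N s)) * (inverse (N 4) * P / D))"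
    by (simp add: divide_inverse mult_ac)
  also have "\<dots> = - (1 / gauss \<psi> (chmul \<alpha> \<alpha>)) * (\<Sum>s\<in>UNIV. \<psi> s * (\<alpha> s * \<alpha> s) * (N s * (N s * (P * inverse (N 4))) / D))"
    by (simp add: sum_distrib_left sum_distrib_right sum_divide_distrib mult_ac)
  also have "\<dots> = - (1 / gauss \<psi> (chmul \<alpha> \<alpha>)) * (\<Sum>s\<in>UNIV. \<psi> s * (\<alpha> s * \<alpha> s) *
       (\<Prod>i\<in>{1..n}. \<nu> i ((s * lam i)^2 / 4) / (poch0 \<psi> (\<gamma> i) (\<nu> i) * poch0 \<psi> eps (\<nu> i))))"
    by (simp only: prod_dividef monomial D_def)
  finally show ?thesis unfolding N_def D_def P_def .
qed

lemma FC_eq_sum_hyp0F1: assumes a: "\<alpha> \<in> mchars" and n: "1 \<le> n"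
  shows "FC \<psi> n \<alpha> (chmul \<alpha> qchar) \<gamma> (\<lambda>i. (lam i)^2) = 1 / (1 - of_nat CARD('a)) ^ n * (- (1 / gauss \<psi> (chmul \<alpha> \<alpha>)) *
           (\<Sum>s\<in>UNIV. \<psi> s * (\<alpha> s * \<alpha> s) * (\<Prod>i\<in>{1..n}. hyp0F1 (\<gamma> i) ((s * lam i)^2 / 4))))"
  unfolding FC_def hyp0F1_def
  by (subst sum.cong[OF refl FC_summand[OF a n]], assumption)
    (simp only: sum_distrib_left[symmetric], rule arg_cong[where f = "\<lambda>x. _ * (_ * x)"],
      rule sum_PiE_sum_prod, simp_all)

lemma prod_hyp0F1_eq_prod_hyp1F1:
  assumes \<beta>: "\<forall>i\<in>{1..n}. \<beta> i \<in> mchars \<and> \<beta> i \<noteq> eps"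
  shows "\<psi> s * (\<Prod>i\<in>{1..n}. hyp0F1 (chmul (\<beta> i) qchar) ((s * lam i)^2 / 4))
       = \<psi> (s * (1 + (\<Sum>i=1..n. lam i))) * (\<Prod>i\<in>{1..n}. hyp1F1 (\<beta> i) (chmul (\<beta> i) (\<beta> i)) (2 * (s * lam i)))"
proof -
  have "(\<Prod>i\<in>{1..n}. hyp0F1 (chmul (\<beta> i) qchar) ((s * lam i)^2 / 4))
      = (\<Prod>i\<in>{1..n}. \<psi> (s * lam i)) * (\<Prod>i\<in>{1..n}. hyp1F1 (\<beta> i) (chmul (\<beta> i) (\<beta> i)) (2 * (s * lam i)))"
    unfolding prod.distrib[symmetric] using \<beta> by (intro prod.cong refl kummer_second_formula) auto
  moreover have "\<psi> (s * (1 + (\<Sum>i=1..n. lam i))) = \<psi> s * (\<Prod>i\<in>{1..n}. \<psi> (s * lam i))"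
    by (simp add: distrib_left sum_distrib_left psi_add psi_sum)
  ultimately show ?thesis by (simp only: mult.assoc)
qed

end

lemma two_nonzero_if_CHAR_neq_2: assumes "CHAR('a::field) \<noteq> 2" shows "(2::'a) \<noteq> 0"
proof
  assume "(2::'a) = 0"
  then have "(of_nat 2 :: 'a) = 0" by simp
  then have "CHAR('a) dvd 2" by (simp only: of_nat_eq_0_iff_char_dvd)
  then have "CHAR('a) \<noteq> 0" by (metis dvd_0_left_iff zero_neq_numeral)
  with \<open>CHAR('a) dvd 2\<close> have "CHAR('a) \<le> 2" by (simp add: dvd_imp_le)
  with assms CHAR_not_1[where 'a='a] \<open>CHAR('a) \<noteq> 0\<close> show False by linarith
qed

theorem theorem3p9:
  fixes \<psi> :: "'a::{finite,field} \<Rightarrow> complex"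
    and n :: nat and \<alpha> :: "'a \<Rightarrow> complex" and \<beta> :: "nat \<Rightarrow> 'a \<Rightarrow> complex"
    and lam :: "nat \<Rightarrow> 'a"
  assumes "CHAR('a) \<noteq> 2"
    and "nontriv_add_char \<psi>"
    and "n \<ge> 1"
    and "\<alpha> \<in> mchars"
    and "\<forall>i\<in>{1..n}. \<beta> i \<in> mchars \<and> \<beta> i \<noteq> eps"
    and "(\<Sum>i=1..n. lam i) \<noteq> -1"
  shows "FC \<psi> n \<alpha> (chmul \<alpha> qchar) (\<lambda>i. chmul (\<beta> i) qchar) (\<lambda>i. (lam i)^2)
       = (chinv \<alpha> (1 + (\<Sum>i=1..n. lam i)))^2 *
         FA \<psi> n (chmul \<alpha> \<alpha>) \<beta> (\<lambda>i. chmul (\<beta> i) (\<beta> i))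
            (\<lambda>i. 2 * lam i / (1 + (\<Sum>j=1..n. lam j)))"
proof -
  interpret add_char_odd \<psi>
    using assms(2) two_nonzero_if_CHAR_neq_2[OF assms(1)] by unfold_locales
  define c where "c = 1 + (\<Sum>i=1..n. lam i)"
  have c: "c \<noteq> 0" using assms(6) by (simp add: c_def add_eq_0_iff)
  let ?C = "1 / (1 - of_nat CARD('a)) ^ n * (- (1 / gauss \<psi> (chmul \<alpha> \<alpha>)))"
  let ?H = "\<lambda>t. \<Prod>i\<in>{1..n}. hyp1F1 (\<beta> i) (chmul (\<beta> i) (\<beta> i)) (t * (2 * lam i / c))"
  have "FC \<psi> n \<alpha> (chmul \<alpha> qchar) (\<lambda>i. chmul (\<beta> i) qchar) (\<lambda>i. (lam i)^2)
      = ?C * (\<Sum>s\<in>UNIV. \<psi> s * (\<alpha> s * \<alpha> s) * (\<Prod>i\<in>{1..n}. hyp0F1 (chmul (\<beta> i) qchar) ((s * lam i)^2 / 4)))"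
    using FC_eq_sum_hyp0F1[OF assms(4,3)] by (simp only: mult.assoc)
  also have "\<dots> = ?C * (\<Sum>s\<in>UNIV. \<psi> (c * s) * (\<alpha> s * \<alpha> s) * ?H (c * s))"
  proof -
    have "(c * s) * (2 * lam i / c) = 2 * (s * lam i)" for s i using c by (simp add: field_simps)
    then have "\<psi> s * (\<Prod>i\<in>{1..n}. hyp0F1 (chmul (\<beta> i) qchar) ((s * lam i)^2 / 4)) = \<psi> (c * s) * ?H (c * s)" for s
      using prod_hyp0F1_eq_prod_hyp1F1[OF assms(5), of s lam] by (simp add: c_def mult.commute)
    then show ?thesis by (simp add: mult_ac)
  qed
  also have "\<dots> = ?C * ((chinv \<alpha> c)^2 * (\<Sum>t\<in>UNIV. \<psi> t * (\<alpha> t * \<alpha> t) * ?H t))"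
    using sum_psi_mchar_squared_scale[OF assms(4) c, of ?H] by simp
  also have "\<dots> = (chinv \<alpha> c)^2 * FA \<psi> n (chmul \<alpha> \<alpha>) \<beta> (\<lambda>i. chmul (\<beta> i) (\<beta> i)) (\<lambda>i. 2 * lam i / c)"
    by (simp only: FA_eq_sum_hyp1F1[OF assms(4,3)] mult_ac)
  finally show ?thesis unfolding c_def .
qed

end
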